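(* Let $\ell_E$ be a symmetric sequence space which does not coincide with $c_0$ or $\ell_\infty$ (up to equivalent norms). Then there exists a reflexive symmetric sequence space $\ell_F$ such that $\ell_F\supset\ell_E$.
   Context: For a bounded sequence $x$, $\mu(x)$ denotes the decreasing rearrangement of $|x|$. A symmetric sequence space is a linear subspace $\ell_E\subset\ell_\infty$ with a complete norm such that $x\in\ell_\infty$, $y\in\ell_E$, $\mu(x)\le\mu(y)$ imply $x\in\ell_E$ and $\|x\|_{\ell_E}\le\|y\|_{\ell_E}$. *)

theory Defs
  imports Complex_Main
begin

type_synonym seq = "nat \<Rightarrow> real"

definition linf :: "seq set" where
  "linf = {x. \<exists>B. \<forall>k. \<bar>x k\<bar> \<le> B}"

definition c0 :: "seq set" where
  "c0 = {x. x \<longlonglongrightarrow> 0}"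

definition decr_rearr :: "seq \<Rightarrow> seq" where
  "decr_rearr x n = Inf {s. 0 \<le> s \<and> finite {k. \<bar>x k\<bar> > s} \<and> card {k. \<bar>x k\<bar> > s} \<le> n}"

definition lin_subspace :: "seq set \<Rightarrow> bool" where
  "lin_subspace L \<longleftrightarrow> (\<lambda>k. 0) \<in> L \<and> (\<forall>x\<in>L. \<forall>y\<in>L. (\<lambda>k. x k + y k) \<in> L)
     \<and> (\<forall>c::real. \<forall>x\<in>L. (\<lambda>k. c * x k) \<in> L)"

definition is_norm_on :: "seq set \<Rightarrow> (seq \<Rightarrow> real) \<Rightarrow> bool" where
  "is_norm_on L N \<longleftrightarrow>
     (\<forall>x\<in>L. 0 \<le> N x \<and> (N x = 0 \<longleftrightarrow> x = (\<lambda>k. 0)))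
   \<and> (\<forall>c. \<forall>x\<in>L. N (\<lambda>k. c * x k) = \<bar>c\<bar> * N x)
   \<and> (\<forall>x\<in>L. \<forall>y\<in>L. N (\<lambda>k. x k + y k) \<le> N x + N y)"

definition complete_wrt :: "seq set \<Rightarrow> (seq \<Rightarrow> real) \<Rightarrow> bool" where
  "complete_wrt L N \<longleftrightarrow>
     (\<forall>X. (\<forall>n. X n \<in> L) \<and> (\<forall>e>0. \<exists>M. \<forall>m\<ge>M. \<forall>n\<ge>M. N (\<lambda>k. X m k - X n k) < e)
        \<longrightarrow> (\<exists>x\<in>L. (\<lambda>n. N (\<lambda>k. X n k - x k)) \<longlonglongrightarrow> 0))"

definition symmetric_seq_space :: "seq set \<Rightarrow> (seq \<Rightarrow> real) \<Rightarrow> bool" where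
  "symmetric_seq_space L N \<longleftrightarrow>
     lin_subspace L \<and> L \<subseteq> linf \<and> is_norm_on L N \<and> complete_wrt L N
   \<and> (\<forall>x\<in>linf. \<forall>y\<in>L. (\<forall>n. decr_rearr x n \<le> decr_rearr y n) \<longrightarrow> x \<in> L \<and> N x \<le> N y)"

text \<open>Topological dual of (L,N): bounded linear functionals on L, normalised to vanish
  outside L (so that they are determined by their values on L).\<close>
definition dual_space :: "seq set \<Rightarrow> (seq \<Rightarrow> real) \<Rightarrow> (seq \<Rightarrow> real) set" where
  "dual_space L N = {f.
      (\<forall>x\<in>L. \<forall>y\<in>L. f (\<lambda>k. x k + y k) = f x + f y)
    \<and> (\<forall>c. \<forall>x\<in>L. f (\<lambda>k. c * x k) = c * f x)
    \<and> (\<exists>C. \<forall>x\<in>L. \<bar>f x\<bar> \<le> C * N x)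
    \<and> (\<forall>x. x \<notin> L \<longrightarrow> f x = 0)}"

definition dual_norm :: "seq set \<Rightarrow> (seq \<Rightarrow> real) \<Rightarrow> (seq \<Rightarrow> real) \<Rightarrow> real" where
  "dual_norm L N f = Sup {\<bar>f x\<bar> | x. x \<in> L \<and> N x \<le> 1}"

text \<open>Reflexivity: every bounded linear functional on the dual is evaluation at a point
  of L (the canonical embedding into the bidual is onto).\<close>
definition reflexive_space :: "seq set \<Rightarrow> (seq \<Rightarrow> real) \<Rightarrow> bool" where
  "reflexive_space L N \<longleftrightarrow>
     (\<forall>\<Phi> :: (seq \<Rightarrow> real) \<Rightarrow> real.
        (\<forall>f\<in>dual_space L N. \<forall>g\<in>dual_space L N. \<Phi> (\<lambda>x. f x + g x) = \<Phi> f + \<Phi> g)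
      \<and> (\<forall>c. \<forall>f\<in>dual_space L N. \<Phi> (\<lambda>x. c * f x) = c * \<Phi> f)
      \<and> (\<exists>C. \<forall>f\<in>dual_space L N. \<bar>\<Phi> f\<bar> \<le> C * dual_norm L N f)
      \<longrightarrow> (\<exists>x\<in>L. \<forall>f\<in>dual_space L N. \<Phi> f = f x))"

end

theory Submission
  imports Defs "HOL-Analysis.L2_Norm" "HOL-Library.Indicator_Function" "HOL-Library.Infinite_Set"
begin

text \<open>Since \<open>l\<^sub>E\<close> is neither \<open>c\<^sub>0\<close> nor \<open>l\<^sub>\<infinity>\<close>, it lies in \<open>c\<^sub>0\<close> and its fundamental
  function \<open>\<phi>(n)\<close>, the norm of the indicator of \<open>n\<close> coordinates, is unbounded. Comparing
  decreasing rearrangements, the \<open>j\<close>-th largest \<open>|y\<^sub>k|\<close> is at most \<open>\<parallel>y\<parallel>\<^sub>E / \<phi>(j)\<close>, so any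
  \<open>n\<close> coordinates of \<open>y \<in> l\<^sub>E\<close> have squares summing to at most \<open>\<parallel>y\<parallel>\<^sub>E\<^sup>2 \<Psi>(n)\<close>, where
  \<open>\<Psi>(n) = \<phi>(1)\<^sup>-\<^sup>2 + ... + \<phi>(n)\<^sup>-\<^sup>2 = o(n)\<close>.

  Choose block sizes \<open>m\<^sub>t \<ge> 2\<^sup>t\<close> with \<open>\<Psi>(m\<^sub>t) \<le> 2\<^sup>-\<^sup>t m\<^sub>t\<close> and norm \<open>l\<^sub>F\<close> by
  \<open>\<parallel>x\<parallel>\<^sub>F\<^sup>2 = \<tau>\<^sub>0(x) + \<tau>\<^sub>1(x) + ...\<close>, where \<open>\<tau>\<^sub>t(x)\<close> is the mean of the \<open>m\<^sub>t\<close> largest \<open>x\<^sub>k\<^sup>2\<close>.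
  Then \<open>\<tau>\<^sub>t(y) \<le> 2\<^sup>-\<^sup>t \<parallel>y\<parallel>\<^sub>E\<^sup>2\<close>, so \<open>l\<^sub>E \<subseteq> l\<^sub>F\<close>, and \<open>l\<^sub>F\<close> is symmetric because each \<open>\<tau>\<^sub>t\<close>
  depends only on the decreasing rearrangement. Reflexivity comes from \<open>l\<^sub>F\<close> being an
  \<open>l\<^sup>2\<close>-sum: its norm is order continuous, every functional is uniformly small on the far tails
  of the unit ball (disjoint unit blocks add up in norm like \<open>sqrt r\<close>, not \<open>r\<close>), and therefore an
  element of the bidual is evaluation at the sequence of its values on the coordinate
  functionals.\<close>

abbreviation mu :: "seq \<Rightarrow> seq" where "mu \<equiv> decr_rearr"

definition trunc :: "nat \<Rightarrow> seq \<Rightarrow> seq" where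
  "trunc n x = (\<lambda>j. if j < n then x j else 0)"

definition tail :: "nat \<Rightarrow> seq \<Rightarrow> seq" where
  "tail n x = (\<lambda>j. if j < n then 0 else x j)"

lemma trunc_plus_tail: "(\<lambda>j. trunc n x j + tail n x j) = x"
  unfolding trunc_def tail_def by auto

lemma trunc_eq_sum_indicator: "trunc n x = (\<lambda>j. \<Sum>k<n. x k * indicator {k} j)"
  unfolding trunc_def indicator_def by (auto simp: of_bool_def if_distrib cong: if_cong)

lemma linfI: "(\<And>k. \<bar>x k\<bar> \<le> B) \<Longrightarrow> x \<in> linf"
  unfolding linf_def by blast

lemma linf_bound:
  assumes "x \<in> linf"
  obtains B where "0 \<le> B" "\<And>k. \<bar>x k\<bar> \<le> B"
proof -
  obtain B where B: "\<And>k. \<bar>x k\<bar> \<le> B" using assms unfolding linf_def by blast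
  moreover have "0 \<le> B" using order_trans[OF abs_ge_zero B] .
  ultimately show thesis using that by blast
qed

lemma linf_mono:
  assumes "x \<in> linf" "\<And>k. \<bar>y k\<bar> \<le> \<bar>x k\<bar>"
  shows "y \<in> linf"
proof -
  obtain B where "\<And>k. \<bar>x k\<bar> \<le> B" using assms(1) unfolding linf_def by blast
  then show ?thesis using assms(2) by (intro linfI[of _ B]) (rule order_trans)
qed

lemma linf_zero: "(\<lambda>k. 0) \<in> linf"
  by (rule linfI[of _ 0]) simp

lemma linf_scale:
  assumes "x \<in> linf"
  shows "(\<lambda>k. c * x k) \<in> linf"
proof -
  obtain B where "\<And>k. \<bar>x k\<bar> \<le> B" using assms unfolding linf_def by blast
  then have "\<bar>c * x k\<bar> \<le> \<bar>c\<bar> * B" for k by (simp add: abs_mult mult_left_mono)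
  then show ?thesis by (rule linfI)
qed

lemma linf_add:
  assumes "x \<in> linf" "y \<in> linf"
  shows "(\<lambda>k. x k + y k) \<in> linf"
proof -
  obtain B C where "\<And>k. \<bar>x k\<bar> \<le> B" "\<And>k. \<bar>y k\<bar> \<le> C"
    using assms unfolding linf_def by blast
  then have "\<bar>x k + y k\<bar> \<le> B + C" for k by (meson abs_triangle_ineq add_mono order_trans)
  then show ?thesis by (rule linfI)
qed

lemma infinite_level_set_if_not_null:
  fixes x :: seq
  assumes "\<not> x \<longlonglongrightarrow> 0"
  obtains r where "r > 0" "infinite {k. r \<le> \<bar>x k\<bar>}"
proof -
  obtain r where "r > 0" and far: "\<And>n0. \<exists>n\<ge>n0. \<not> \<bar>x n\<bar> < r"
    using assms unfolding LIMSEQ_iff by auto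
  then have "infinite {k. r \<le> \<bar>x k\<bar>}"
    unfolding infinite_nat_iff_unbounded_le by (simp add: not_less)
  with \<open>r > 0\<close> show thesis by (rule that)
qed

lemma finite_level_set_if_null:
  fixes x :: seq
  assumes "x \<longlonglongrightarrow> 0" "s > 0"
  shows "finite {k. s \<le> \<bar>x k\<bar>}"
proof -
  obtain n0 where "\<And>n. n \<ge> n0 \<Longrightarrow> \<bar>x n\<bar> < s"
    using assms unfolding LIMSEQ_iff by auto
  then have "{k. s \<le> \<bar>x k\<bar>} \<subseteq> {..<n0}"
    by (auto simp: not_less[symmetric])
  then show ?thesis by (rule finite_subset) simp
qed

lemma square_sum_disjoint:
  fixes f :: "'a \<Rightarrow> real"
  assumes "finite I" "\<And>i j. i \<in> I \<Longrightarrow> j \<in> I \<Longrightarrow> i \<noteq> j \<Longrightarrow> f i = 0 \<or> f j = 0"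
  shows "(\<Sum>i\<in>I. f i)\<^sup>2 = (\<Sum>i\<in>I. (f i)\<^sup>2)"
  using assms
proof (induction I rule: finite_induct)
  case (insert a I)
  have "f a * (\<Sum>i\<in>I. f i) = 0"
  proof (cases "f a = 0")
    case False
    then have "f i = 0" if "i \<in> I" for i using insert.prems[of a i] insert.hyps(2) that by auto
    then show ?thesis by simp
  qed simp
  then show ?case using insert by (simp add: power2_sum)
qed simp

lemma partial_sums_sublinear_if_null:
  fixes a :: "nat \<Rightarrow> real"
  assumes "a \<longlonglongrightarrow> 0" "\<epsilon> > 0"
  shows "\<exists>M. \<forall>n\<ge>M. (\<Sum>i<n. a i) \<le> \<epsilon> * real n"
proof -
  obtain I where I: "\<And>i. I \<le> i \<Longrightarrow> \<bar>a i\<bar> < \<epsilon> / 2"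
    using LIMSEQ_D[OF assms(1), of "\<epsilon> / 2"] assms(2) by auto
  define A where "A = (\<Sum>i<I. a i)"
  define M where "M = max I (nat \<lceil>2 * A / \<epsilon>\<rceil>)"
  have "(\<Sum>i<n. a i) \<le> \<epsilon> * real n" if "M \<le> n" for n
  proof -
    have "I \<le> n" using that by (simp add: M_def)
    then have "(\<Sum>i<n. a i) = A + (\<Sum>i\<in>{I..<n}. a i)"
      using sum.atLeastLessThan_concat[of 0 I n a] by (simp add: A_def atLeast0LessThan)
    also have "(\<Sum>i\<in>{I..<n}. a i) \<le> (\<Sum>i\<in>{I..<n}. \<epsilon> / 2)"
    proof (rule sum_mono)
      fix i assume "i \<in> {I..<n}"
      then have "\<bar>a i\<bar> < \<epsilon> / 2" using I by simp
      then show "a i \<le> \<epsilon> / 2" by linarith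
    qed
    also have "\<dots> \<le> real n * (\<epsilon> / 2)" using assms(2) by simp
    also have "A \<le> real n * (\<epsilon> / 2)"
    proof -
      have "2 * A / \<epsilon> \<le> real (nat \<lceil>2 * A / \<epsilon>\<rceil>)" by (rule real_nat_ceiling_ge)
      also have "\<dots> \<le> real n" using that by (simp add: M_def)
      finally show ?thesis using assms(2) by (simp add: pos_divide_le_eq mult.commute)
    qed
    finally show ?thesis by simp
  qed
  then show ?thesis by blast
qed

lemma exists_linear_gt_sqrt:
  fixes C \<delta> :: real
  assumes "\<delta> > 0"
  obtains r :: nat where "C * sqrt (real r) < real r * \<delta>"
proof -
  define r where "r = nat \<lceil>(C / \<delta>)\<^sup>2\<rceil> + 1"
  have "0 < r" unfolding r_def by simp
  then have "0 < sqrt (real r)" by simp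
  have "(C / \<delta>)\<^sup>2 < real r" unfolding r_def by linarith
  then have "C / \<delta> < sqrt (real r)" by (rule real_less_rsqrt)
  then have "C < sqrt (real r) * \<delta>" using assms by (simp add: field_simps)
  then have "C * sqrt (real r) < sqrt (real r) * \<delta> * sqrt (real r)"
    using \<open>0 < sqrt (real r)\<close> by (rule mult_strict_right_mono)
  also have "\<dots> = real r * \<delta>" by simp
  finally show thesis by (rule that)
qed

section \<open>Decreasing rearrangement\<close>

lemma decr_rearr_candidates_nonempty:
  assumes "x \<in> linf"
  shows "{s. 0 \<le> s \<and> finite {k. \<bar>x k\<bar> > s} \<and> card {k. \<bar>x k\<bar> > s} \<le> n} \<noteq> {}"
proof -
  obtain B where "0 \<le> B" "\<And>k. \<bar>x k\<bar> \<le> B" by (rule linf_bound[OF assms]) blast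
  then have "{k. \<bar>x k\<bar> > B} = {}" by (simp add: not_less)
  with \<open>0 \<le> B\<close> have "B \<in> {s. 0 \<le> s \<and> finite {k. \<bar>x k\<bar> > s} \<and> card {k. \<bar>x k\<bar> > s} \<le> n}"
    by simp
  then show ?thesis by blast
qed

lemma decr_rearr_nonneg: "x \<in> linf \<Longrightarrow> 0 \<le> mu x n"
  unfolding decr_rearr_def by (rule cInf_greatest[OF decr_rearr_candidates_nonempty]) auto

lemma decr_rearr_le_bound:
  assumes "\<And>k. \<bar>x k\<bar> \<le> c" "0 \<le> c"
  shows "mu x n \<le> c"
proof -
  have "{k. \<bar>x k\<bar> > c} = {}" using assms by (simp add: not_less)
  then show ?thesis unfolding decr_rearr_def
    by (intro cInf_lower) (auto simp: assms intro!: bdd_belowI[where m=0])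
qed

lemma decr_rearr_le_0_beyond_support:
  assumes "finite S" "card S \<le> n" "\<And>k. k \<notin> S \<Longrightarrow> x k = 0"
  shows "mu x n \<le> 0"
proof -
  have sub: "{k. \<bar>x k\<bar> > 0} \<subseteq> S" using assms by force
  then have "finite {k. \<bar>x k\<bar> > 0}" using assms finite_subset by blast
  moreover have "card {k. \<bar>x k\<bar> > 0} \<le> n" using card_mono[OF assms(1) sub] assms by linarith
  ultimately show ?thesis unfolding decr_rearr_def
    by (intro cInf_lower) (auto intro!: bdd_belowI[where m=0])
qed

lemma decr_rearr_ge:
  assumes "x \<in> linf" "finite S" "n < card S" "\<And>k. k \<in> S \<Longrightarrow> c \<le> \<bar>x k\<bar>"
  shows "c \<le> mu x n"
  unfolding decr_rearr_def
proof (rule cInf_greatest[OF decr_rearr_candidates_nonempty[OF assms(1)]], rule ccontr)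
  fix s assume s: "s \<in> {s. 0 \<le> s \<and> finite {k. \<bar>x k\<bar> > s} \<and> card {k. \<bar>x k\<bar> > s} \<le> n}"
    and "\<not> c \<le> s"
  then have "S \<subseteq> {k. \<bar>x k\<bar> > s}" using assms by force
  then have "card S \<le> card {k. \<bar>x k\<bar> > s}" using s card_mono by blast
  then show False using s assms by simp
qed

lemma sum_squares_le_decr_rearr:
  assumes "x \<in> linf" "finite S"
  shows "(\<Sum>k\<in>S. (x k)\<^sup>2) \<le> (\<Sum>i<card S. (mu x i)\<^sup>2)"
  using assms(2)
proof (induction "card S" arbitrary: S)
  case 0
  then show ?case by simp
next
  case (Suc j)
  define c where "c = Min ((\<lambda>k. \<bar>x k\<bar>) ` S)"
  have "c \<in> (\<lambda>k. \<bar>x k\<bar>) ` S" unfolding c_def using Suc by (intro Min_in) auto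
  then obtain k where k: "k \<in> S" "\<bar>x k\<bar> = c" by auto
  have cmin: "c \<le> \<bar>x k'\<bar>" if "k' \<in> S" for k' unfolding c_def using Suc that by simp
  have "card (S - {k}) = j" using Suc k by simp
  then have IH: "(\<Sum>k\<in>S-{k}. (x k)\<^sup>2) \<le> (\<Sum>i<j. (mu x i)\<^sup>2)"
    using Suc.hyps(1)[of "S - {k}"] Suc.prems by simp
  have "c \<le> mu x j" using decr_rearr_ge[OF assms(1) Suc.prems, of j c] cmin Suc.hyps(2) by simp
  then have "\<bar>x k\<bar>\<^sup>2 \<le> (mu x j)\<^sup>2" using power_mono[of c "mu x j" 2] k by simp
  then have "(x k)\<^sup>2 \<le> (mu x j)\<^sup>2" by simp
  moreover have "(\<Sum>k\<in>S. (x k)\<^sup>2) = (x k)\<^sup>2 + (\<Sum>k\<in>S-{k}. (x k)\<^sup>2)"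
    using Suc k by (simp add: sum.remove)
  ultimately show ?case using IH Suc.hyps(2)[symmetric] by simp
qed

text \<open>For a null sequence the infimum defining \<open>mu x n\<close> is attained: only finitely many values
  of \<open>\<bar>x\<bar>\<close> lie in \<open>(s/2, s)\<close>, so the largest of them (or \<open>s/2\<close>) is a level \<open>s' < s\<close> with
  the same strict level set as the non-strict one of \<open>s\<close>.\<close>

lemma decr_rearr_attained:
  assumes "x \<in> linf" "x \<longlonglongrightarrow> 0" "mu x n > 0"
  shows "n < card {k. mu x n \<le> \<bar>x k\<bar>}"
proof (rule ccontr)
  define s where "s = mu x n"
  define A where "A = {k. s \<le> \<bar>x k\<bar>}"
  assume "\<not> n < card {k. mu x n \<le> \<bar>x k\<bar>}"
  then have cA: "card A \<le> n" unfolding A_def s_def by simp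
  have s0: "s > 0" using assms s_def by simp
  have fA: "finite A" unfolding A_def using finite_level_set_if_null[OF assms(2) s0] .
  define V where "V = (\<lambda>k. \<bar>x k\<bar>) ` {k. s/2 < \<bar>x k\<bar> \<and> \<bar>x k\<bar> < s}"
  have fV: "finite V" unfolding V_def
    by (rule finite_imageI, rule finite_subset[OF _ finite_level_set_if_null[OF assms(2), of "s/2"]])
      (use s0 in auto)
  define s' where "s' = Max (insert (s/2) V)"
  have s'ge: "s/2 \<le> s'" unfolding s'_def using fV by (intro Max_ge) auto
  have s'lt: "s' < s" unfolding s'_def using fV s0 by (auto simp: V_def)
  have s'le: "\<bar>x k\<bar> \<le> s'" if "s/2 < \<bar>x k\<bar>" "\<bar>x k\<bar> < s" for k
    unfolding s'_def using fV that by (auto simp: V_def)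
  have "s' < \<bar>x k\<bar> \<longleftrightarrow> s \<le> \<bar>x k\<bar>" for k
    using s'le[of k] s'ge s'lt by (cases "\<bar>x k\<bar> < s") auto
  then have "{k. s' < \<bar>x k\<bar>} = A" unfolding A_def by blast
  then have "s' \<in> {s. 0 \<le> s \<and> finite {k. \<bar>x k\<bar> > s} \<and> card {k. \<bar>x k\<bar> > s} \<le> n}"
    using fA cA s'ge s0 by simp
  then have "s \<le> s'" unfolding s_def decr_rearr_def
    by (intro cInf_lower) (auto intro!: bdd_belowI[where m=0])
  then show False using s'lt by simp
qed

lemma decr_rearr_sum_squares_attained:
  assumes "x \<in> linf" "x \<longlonglongrightarrow> 0"
  shows "\<exists>S. finite S \<and> card S = n \<and> (\<Sum>i<n. (mu x i)\<^sup>2) \<le> (\<Sum>k\<in>S. (x k)\<^sup>2)"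
proof (induction n)
  case 0
  show ?case by (intro exI[of _ "{}"]) simp
next
  case (Suc n)
  then obtain S where S: "finite S" "card S = n" "(\<Sum>i<n. (mu x i)\<^sup>2) \<le> (\<Sum>k\<in>S. (x k)\<^sup>2)"
    by blast
  have "\<exists>k. k \<notin> S \<and> (mu x n)\<^sup>2 \<le> (x k)\<^sup>2"
  proof (cases "mu x n > 0")
    case True
    have "n < card {k. mu x n \<le> \<bar>x k\<bar>}" using decr_rearr_attained[OF assms True] .
    then have "\<not> {k. mu x n \<le> \<bar>x k\<bar>} \<subseteq> S"
      using card_mono[OF S(1)] S(2) by (auto simp: not_le[symmetric])
    then obtain k where "mu x n \<le> \<bar>x k\<bar>" "k \<notin> S" by blast
    then show ?thesis using power_mono[OF _ decr_rearr_nonneg[OF assms(1)], of n "\<bar>x k\<bar>" 2] by auto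
  next
    case False
    then have "mu x n = 0" using decr_rearr_nonneg[OF assms(1)] by (meson antisym not_le)
    moreover obtain k where "k \<notin> S" using ex_new_if_finite[OF infinite_UNIV_nat S(1)] by blast
    ultimately show ?thesis by auto
  qed
  then obtain k where "k \<notin> S" "(mu x n)\<^sup>2 \<le> (x k)\<^sup>2" by blast
  with S show ?case by (intro exI[of _ "insert k S"]) simp
qed

lemma scaled_indicator_linf: "(\<lambda>j. c * indicator A j) \<in> linf"
  by (rule linfI[of _ "\<bar>c\<bar>"]) (simp add: indicator_def abs_mult)

lemma decr_rearr_le_scaled_indicator:
  assumes "finite A" "finite S" "card S \<le> card A" "\<And>k. k \<notin> S \<Longrightarrow> x k = 0"
    and "\<And>k. \<bar>x k\<bar> \<le> c" "0 \<le> c"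
  shows "mu x i \<le> mu (\<lambda>j. c * indicator A j) i"
proof (cases "i < card A")
  case True
  have "mu x i \<le> c" using assms(5,6) by (rule decr_rearr_le_bound)
  also have "c \<le> mu (\<lambda>j. c * indicator A j) i"
    by (rule decr_rearr_ge[OF scaled_indicator_linf assms(1) True]) (simp add: assms(6))
  finally show ?thesis .
next
  case False
  have "mu x i \<le> 0"
    by (rule decr_rearr_le_0_beyond_support[OF assms(2) _ assms(4)]) (use False assms(3) in auto)
  also have "0 \<le> mu (\<lambda>j. c * indicator A j) i" by (rule decr_rearr_nonneg[OF scaled_indicator_linf])
  finally show ?thesis .
qed

lemma scaled_indicator_le_decr_rearr:
  assumes "y \<in> linf" "finite A" "finite S" "card A \<le> card S" "\<And>k. k \<in> S \<Longrightarrow> c \<le> \<bar>y k\<bar>" "0 \<le> c"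
  shows "mu (\<lambda>j. c * indicator A j) i \<le> mu y i"
proof (cases "i < card A")
  case True
  have "mu (\<lambda>j. c * indicator A j) i \<le> c"
    by (rule decr_rearr_le_bound) (simp_all add: assms(6) indicator_def)
  also have "c \<le> mu y i" by (rule decr_rearr_ge[OF assms(1,3)]) (use True assms(4,5) in auto)
  finally show ?thesis .
next
  case False
  have "mu (\<lambda>j. c * indicator A j) i \<le> 0"
    by (rule decr_rearr_le_0_beyond_support[OF assms(2)]) (use False in auto)
  also have "0 \<le> mu y i" by (rule decr_rearr_nonneg[OF assms(1)])
  finally show ?thesis .
qed

section \<open>Normed sequence spaces and their duals\<close>

definition coord_functional :: "seq set \<Rightarrow> nat \<Rightarrow> seq \<Rightarrow> real" where
  "coord_functional L k x = (if x \<in> L then x k else 0)"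

text \<open>The functional \<open>x \<mapsto> f (trunc n x)\<close>, written with coordinate functionals so that
  an element of the bidual can be applied to it term by term.\<close>

definition trunc_functional :: "seq set \<Rightarrow> (seq \<Rightarrow> real) \<Rightarrow> nat \<Rightarrow> seq \<Rightarrow> real" where
  "trunc_functional L f n x = (\<Sum>k<n. f (indicator {k}) * coord_functional L k x)"

locale normed_seq_space =
  fixes L :: "seq set" and N :: "seq \<Rightarrow> real"
  assumes lin_subspace: "lin_subspace L" and norm: "is_norm_on L N"
begin

lemma zero_mem: "(\<lambda>k. 0) \<in> L"
  and add_mem: "x \<in> L \<Longrightarrow> y \<in> L \<Longrightarrow> (\<lambda>k. x k + y k) \<in> L"
  and scale_mem: "x \<in> L \<Longrightarrow> (\<lambda>k. c * x k) \<in> L"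
  using lin_subspace unfolding lin_subspace_def by blast+

lemma norm_nonneg: "x \<in> L \<Longrightarrow> 0 \<le> N x"
  and norm_eq_0_iff: "x \<in> L \<Longrightarrow> N x = 0 \<longleftrightarrow> x = (\<lambda>k. 0)"
  and norm_scale: "x \<in> L \<Longrightarrow> N (\<lambda>k. c * x k) = \<bar>c\<bar> * N x"
  using norm unfolding is_norm_on_def by blast+

lemma diff_mem: "x \<in> L \<Longrightarrow> y \<in> L \<Longrightarrow> (\<lambda>k. x k - y k) \<in> L"
  using add_mem[of x "\<lambda>k. -1 * y k"] scale_mem[of y "-1"] by simp

lemma norm_zero: "N (\<lambda>k. 0) = 0"
  using norm_eq_0_iff[OF zero_mem] by simp

lemma dual_add: "f \<in> dual_space L N \<Longrightarrow> x \<in> L \<Longrightarrow> y \<in> L \<Longrightarrow> f (\<lambda>k. x k + y k) = f x + f y"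
  and dual_scale: "f \<in> dual_space L N \<Longrightarrow> x \<in> L \<Longrightarrow> f (\<lambda>k. c * x k) = c * f x"
  and dual_outside: "f \<in> dual_space L N \<Longrightarrow> x \<notin> L \<Longrightarrow> f x = 0"
  unfolding dual_space_def by blast+

lemma dual_bounded:
  assumes "f \<in> dual_space L N"
  obtains C where "0 \<le> C" "\<And>x. x \<in> L \<Longrightarrow> \<bar>f x\<bar> \<le> C * N x"
proof -
  obtain C where C: "\<And>x. x \<in> L \<Longrightarrow> \<bar>f x\<bar> \<le> C * N x" using assms unfolding dual_space_def by blast
  have "\<bar>f x\<bar> \<le> max C 0 * N x" if "x \<in> L" for x
    using C[OF that] norm_nonneg[OF that] by (meson max.cobounded1 mult_right_mono order_trans)
  then show thesis using that[of "max C 0"] by simp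
qed

lemma dual_diff: "f \<in> dual_space L N \<Longrightarrow> x \<in> L \<Longrightarrow> y \<in> L \<Longrightarrow> f (\<lambda>k. x k - y k) = f x - f y"
  using dual_add[of f x "\<lambda>k. -1 * y k"] dual_scale[of f y "-1"] scale_mem[of y "-1"] by simp

lemma lincomb_mem:
  assumes "finite I" "\<And>p. p \<in> I \<Longrightarrow> u p \<in> L"
  shows "(\<lambda>k. \<Sum>p\<in>I. a p * u p k) \<in> L"
  using assms by (induction I rule: finite_induct) (simp_all add: zero_mem add_mem scale_mem)

lemma dual_lincomb:
  assumes "f \<in> dual_space L N" "finite I" "\<And>p. p \<in> I \<Longrightarrow> u p \<in> L"
  shows "f (\<lambda>k. \<Sum>p\<in>I. a p * u p k) = (\<Sum>p\<in>I. a p * f (u p))"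
  using assms(2,3)
proof (induction I rule: finite_induct)
  case empty
  then show ?case using dual_scale[OF assms(1) zero_mem, of 0] by simp
next
  case (insert q I)
  have uq: "(\<lambda>k. a q * u q k) \<in> L" and sum: "(\<lambda>k. \<Sum>p\<in>I. a p * u p k) \<in> L"
    using insert by (auto intro: scale_mem lincomb_mem)
  show ?case
    using insert dual_add[OF assms(1) uq sum] dual_scale[OF assms(1), of "u q" "a q"] by simp
qed

lemma dual_space_zero: "(\<lambda>x. 0) \<in> dual_space L N"
  unfolding dual_space_def by (intro CollectI conjI exI[of _ 0]) simp_all

lemma dual_space_add:
  assumes "f \<in> dual_space L N" "g \<in> dual_space L N"
  shows "(\<lambda>x. f x + g x) \<in> dual_space L N"
proof -
  obtain C1 where C1: "\<And>x. x \<in> L \<Longrightarrow> \<bar>f x\<bar> \<le> C1 * N x"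
    using assms(1) unfolding dual_space_def by blast
  obtain C2 where C2: "\<And>x. x \<in> L \<Longrightarrow> \<bar>g x\<bar> \<le> C2 * N x"
    using assms(2) unfolding dual_space_def by blast
  have "\<bar>f x + g x\<bar> \<le> (C1 + C2) * N x" if "x \<in> L" for x
    using abs_triangle_ineq[of "f x" "g x"] C1[OF that] C2[OF that]
    unfolding distrib_right by linarith
  then have "\<forall>x\<in>L. \<bar>f x + g x\<bar> \<le> (C1 + C2) * N x" by blast
  then show ?thesis
    using dual_add[OF assms(1)] dual_add[OF assms(2)] dual_scale[OF assms(1)] dual_scale[OF assms(2)]
      dual_outside[OF assms(1)] dual_outside[OF assms(2)]
    unfolding dual_space_def by (auto simp: distrib_left)
qed

lemma dual_space_scale:
  assumes "f \<in> dual_space L N"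
  shows "(\<lambda>x. c * f x) \<in> dual_space L N"
proof -
  obtain C where "\<And>x. x \<in> L \<Longrightarrow> \<bar>f x\<bar> \<le> C * N x" using assms unfolding dual_space_def by blast
  then have "\<forall>x\<in>L. \<bar>c * f x\<bar> \<le> (\<bar>c\<bar> * C) * N x" by (simp add: abs_mult mult.assoc mult_left_mono)
  then show ?thesis
    using dual_add[OF assms] dual_scale[OF assms] dual_outside[OF assms]
    unfolding dual_space_def by (auto simp: distrib_left)
qed

lemma dual_space_diff:
  "f \<in> dual_space L N \<Longrightarrow> g \<in> dual_space L N \<Longrightarrow> (\<lambda>x. f x - g x) \<in> dual_space L N"
  using dual_space_add[OF _ dual_space_scale, of f g "-1"] by simp

lemma dual_space_sum:
  assumes "finite I" "\<And>p. p \<in> I \<Longrightarrow> h p \<in> dual_space L N"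
  shows "(\<lambda>x. \<Sum>p\<in>I. h p x) \<in> dual_space L N"
  using assms by (induction I rule: finite_induct) (simp_all add: dual_space_zero dual_space_add)

lemma coord_functional_mem_dual:
  assumes "\<And>x. x \<in> L \<Longrightarrow> \<bar>x k\<bar> \<le> C * N x"
  shows "coord_functional L k \<in> dual_space L N"
  unfolding dual_space_def coord_functional_def using assms add_mem scale_mem by auto

lemma dual_norm_le:
  assumes "0 \<le> B" "\<And>x. x \<in> L \<Longrightarrow> N x \<le> 1 \<Longrightarrow> \<bar>f x\<bar> \<le> B"
  shows "dual_norm L N f \<le> B"
  unfolding dual_norm_def
  by (rule cSup_least) (use assms zero_mem norm_zero in auto)

lemma dual_norm_nonneg:
  assumes "f \<in> dual_space L N"
  shows "0 \<le> dual_norm L N f"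
proof -
  obtain C where C: "0 \<le> C" "\<And>x. x \<in> L \<Longrightarrow> \<bar>f x\<bar> \<le> C * N x"
    by (rule dual_bounded[OF assms]) blast
  have "bdd_above {\<bar>f x\<bar> |x. x \<in> L \<and> N x \<le> 1}"
    by (rule bdd_aboveI[of _ C]) (use C in \<open>auto intro: order_trans mult_left_le\<close>)
  then have "\<bar>f (\<lambda>k. 0)\<bar> \<le> dual_norm L N f"
    unfolding dual_norm_def by (rule cSup_upper[rotated]) (use zero_mem norm_zero in auto)
  then show ?thesis by (meson abs_ge_zero order_trans)
qed

end

locale bidual_functional = normed_seq_space +
  fixes \<Phi> :: "(seq \<Rightarrow> real) \<Rightarrow> real"
  assumes bidual_add:
      "f \<in> dual_space L N \<Longrightarrow> g \<in> dual_space L N \<Longrightarrow> \<Phi> (\<lambda>x. f x + g x) = \<Phi> f + \<Phi> g"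
    and bidual_scale: "f \<in> dual_space L N \<Longrightarrow> \<Phi> (\<lambda>x. c * f x) = c * \<Phi> f"
    and bidual_bounded: "\<exists>C. \<forall>f\<in>dual_space L N. \<bar>\<Phi> f\<bar> \<le> C * dual_norm L N f"
begin

lemma bidual_bound:
  obtains C where "0 \<le> C" "\<And>f. f \<in> dual_space L N \<Longrightarrow> \<bar>\<Phi> f\<bar> \<le> C * dual_norm L N f"
proof -
  obtain C where C: "\<And>f. f \<in> dual_space L N \<Longrightarrow> \<bar>\<Phi> f\<bar> \<le> C * dual_norm L N f"
    using bidual_bounded by blast
  have "\<bar>\<Phi> f\<bar> \<le> max C 0 * dual_norm L N f" if "f \<in> dual_space L N" for f
    using C[OF that] dual_norm_nonneg[OF that] by (meson max.cobounded1 mult_right_mono order_trans)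
  then show thesis using that[of "max C 0"] by simp
qed

lemma bidual_diff:
  "f \<in> dual_space L N \<Longrightarrow> g \<in> dual_space L N \<Longrightarrow> \<Phi> (\<lambda>x. f x - g x) = \<Phi> f - \<Phi> g"
  using bidual_add[OF _ dual_space_scale, of f g "-1"] bidual_scale[of g "-1"] by simp

lemma bidual_sum:
  assumes "finite I" "\<And>p. p \<in> I \<Longrightarrow> h p \<in> dual_space L N"
  shows "\<Phi> (\<lambda>x. \<Sum>p\<in>I. h p x) = (\<Sum>p\<in>I. \<Phi> (h p))"
  using assms
proof (induction I rule: finite_induct)
  case empty
  show ?case using bidual_scale[OF dual_space_zero, of 0] by simp
next
  case (insert q I)
  then show ?case by (simp add: bidual_add dual_space_sum)
qed

lemma bidual_lincomb:
  assumes "finite I" "\<And>p. p \<in> I \<Longrightarrow> h p \<in> dual_space L N"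
  shows "\<Phi> (\<lambda>x. \<Sum>p\<in>I. a p * h p x) = (\<Sum>p\<in>I. a p * \<Phi> (h p))"
  using bidual_sum[OF assms(1), of "\<lambda>p x. a p * h p x"] by (simp add: assms(2) dual_space_scale bidual_scale)

end

section \<open>The spaces \<open>l\<^sub>F\<close>\<close>

definition top_mean_sq :: "(nat \<Rightarrow> nat) \<Rightarrow> nat \<Rightarrow> seq \<Rightarrow> real" where
  "top_mean_sq m t x = Sup {(\<Sum>k\<in>S. (x k)\<^sup>2) / real (m t) | S. finite S \<and> card S \<le> m t}"

definition F_space :: "(nat \<Rightarrow> nat) \<Rightarrow> seq set" where
  "F_space m = {x \<in> linf. summable (\<lambda>t. top_mean_sq m t x)}"

definition F_norm :: "(nat \<Rightarrow> nat) \<Rightarrow> seq \<Rightarrow> real" where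
  "F_norm m x = sqrt (\<Sum>t. top_mean_sq m t x)"

locale block_weights =
  fixes m :: "nat \<Rightarrow> nat"
  assumes block_pos: "\<And>t. 1 \<le> m t"
begin

abbreviation "\<tau> \<equiv> top_mean_sq m"
abbreviation "LF \<equiv> F_space m"
abbreviation "NF \<equiv> F_norm m"

lemma mean_sq_le_sq_bound:
  assumes "\<And>k. \<bar>x k\<bar> \<le> B" "card S \<le> m t"
  shows "(\<Sum>k\<in>S. (x k)\<^sup>2) / real (m t) \<le> B\<^sup>2"
proof -
  have "(x k)\<^sup>2 \<le> B\<^sup>2" for k
    using power_mono[OF assms(1) abs_ge_zero, of k 2] by simp
  then have "(\<Sum>k\<in>S. (x k)\<^sup>2) \<le> card S * B\<^sup>2" using sum_mono[of S "\<lambda>k. (x k)\<^sup>2" "\<lambda>_. B\<^sup>2"]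
    by simp
  also have "\<dots> \<le> m t * B\<^sup>2" using assms(2) by (simp add: mult_right_mono)
  finally show ?thesis using block_pos[of t] by (simp add: divide_le_eq mult.commute)
qed

lemma top_mean_sq_ge:
  assumes "x \<in> linf" "finite S" "card S \<le> m t"
  shows "(\<Sum>k\<in>S. (x k)\<^sup>2) / real (m t) \<le> \<tau> t x"
proof -
  obtain B where B: "\<And>k. \<bar>x k\<bar> \<le> B" using assms(1) unfolding linf_def by blast
  have "bdd_above {(\<Sum>k\<in>S. (x k)\<^sup>2) / real (m t) | S. finite S \<and> card S \<le> m t}"
    by (auto intro!: bdd_aboveI[where M="B\<^sup>2"] mean_sq_le_sq_bound[OF B])
  moreover have "(\<Sum>k\<in>S. (x k)\<^sup>2) / real (m t)
      \<in> {(\<Sum>k\<in>S. (x k)\<^sup>2) / real (m t) | S. finite S \<and> card S \<le> m t}"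
    using assms(2,3) by blast
  ultimately show ?thesis unfolding top_mean_sq_def by (rule cSup_upper[rotated])
qed

lemma top_mean_sq_le:
  assumes "\<And>S. finite S \<Longrightarrow> card S \<le> m t \<Longrightarrow> (\<Sum>k\<in>S. (x k)\<^sup>2) / real (m t) \<le> c"
  shows "\<tau> t x \<le> c"
  unfolding top_mean_sq_def
proof (rule cSup_least)
  have "(\<Sum>k\<in>{}. (x k)\<^sup>2) / real (m t)
      \<in> {(\<Sum>k\<in>S. (x k)\<^sup>2) / real (m t) | S. finite S \<and> card S \<le> m t}"
    by (intro CollectI exI[of _ "{}"]) simp
  then show "{(\<Sum>k\<in>S. (x k)\<^sup>2) / real (m t) | S. finite S \<and> card S \<le> m t} \<noteq> {}" by blast
qed (use assms in blast)

lemma top_mean_sq_nonneg: "x \<in> linf \<Longrightarrow> 0 \<le> \<tau> t x"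
  using top_mean_sq_ge[of x "{}" t] by simp

lemma top_mean_sq_le_sq_bound:
  assumes "\<And>k. \<bar>x k\<bar> \<le> B"
  shows "\<tau> t x \<le> B\<^sup>2"
  using mean_sq_le_sq_bound[OF assms] by (rule top_mean_sq_le)

lemma top_mean_sq_mono:
  assumes "x \<in> linf" "\<And>k. \<bar>y k\<bar> \<le> \<bar>x k\<bar>"
  shows "\<tau> t y \<le> \<tau> t x"
proof (rule top_mean_sq_le)
  fix S :: "nat set" assume S: "finite S" "card S \<le> m t"
  have "(\<Sum>k\<in>S. (y k)\<^sup>2) \<le> (\<Sum>k\<in>S. (x k)\<^sup>2)"
    by (intro sum_mono) (simp add: abs_le_square_iff[symmetric] assms(2))
  then have "(\<Sum>k\<in>S. (y k)\<^sup>2) / real (m t) \<le> (\<Sum>k\<in>S. (x k)\<^sup>2) / real (m t)"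
    by (simp add: divide_right_mono)
  also have "\<dots> \<le> \<tau> t x" using top_mean_sq_ge[OF assms(1) S] .
  finally show "(\<Sum>k\<in>S. (y k)\<^sup>2) / real (m t) \<le> \<tau> t x" .
qed

lemma sq_le_top_mean_sq: "x \<in> linf \<Longrightarrow> (x k)\<^sup>2 / real (m t) \<le> \<tau> t x"
  using top_mean_sq_ge[of x "{k}" t] block_pos[of t] by simp

lemma top_mean_sq_zero: "\<tau> t (\<lambda>k. 0) = 0"
  using top_mean_sq_le_sq_bound[of "\<lambda>k. 0" 0 t] top_mean_sq_nonneg[OF linf_zero, of t] by simp

lemma top_mean_sq_scale:
  assumes "x \<in> linf"
  shows "\<tau> t (\<lambda>k. c * x k) = c\<^sup>2 * \<tau> t x"
proof -
  have le: "\<tau> t (\<lambda>k. c * x k) \<le> c\<^sup>2 * \<tau> t x" if "x \<in> linf" for c x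
  proof (rule top_mean_sq_le)
    fix S :: "nat set" assume S: "finite S" "card S \<le> m t"
    have "(\<Sum>k\<in>S. (c * x k)\<^sup>2) / real (m t) = c\<^sup>2 * ((\<Sum>k\<in>S. (x k)\<^sup>2) / real (m t))"
      by (simp add: power_mult_distrib sum_distrib_left)
    also have "\<dots> \<le> c\<^sup>2 * \<tau> t x" using top_mean_sq_ge[OF that S] by (rule mult_left_mono) simp
    finally show "(\<Sum>k\<in>S. (c * x k)\<^sup>2) / real (m t) \<le> c\<^sup>2 * \<tau> t x" .
  qed
  show ?thesis
  proof (cases "c = 0")
    case False
    have "c\<^sup>2 * \<tau> t x = c\<^sup>2 * \<tau> t (\<lambda>k. (1/c) * (c * x k))" using False by simp
    also have "\<dots> \<le> c\<^sup>2 * ((1/c)\<^sup>2 * \<tau> t (\<lambda>k. c * x k))"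
      using le[OF linf_scale[OF assms], of "1/c"] by (rule mult_left_mono) simp
    also have "\<dots> = \<tau> t (\<lambda>k. c * x k)" using False by (simp add: power_one_over)
    finally show ?thesis using le[OF assms, of c] by linarith
  qed (simp add: top_mean_sq_zero)
qed

lemma top_mean_sq_triangle:
  assumes "x \<in> linf" "y \<in> linf"
  shows "sqrt (\<tau> t (\<lambda>k. x k + y k)) \<le> sqrt (\<tau> t x) + sqrt (\<tau> t y)"
proof -
  have "\<tau> t (\<lambda>k. x k + y k) \<le> (sqrt (\<tau> t x) + sqrt (\<tau> t y))\<^sup>2"
  proof (rule top_mean_sq_le)
    fix S :: "nat set" assume S: "finite S" "card S \<le> m t"
    have r: "sqrt (real (m t)) > 0" using block_pos[of t] by simp
    have L2: "sqrt ((\<Sum>k\<in>S. (z k)\<^sup>2) / real (m t)) = L2_set z S / sqrt (real (m t))" for z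
      unfolding L2_set_def by (simp add: real_sqrt_divide)
    have "sqrt ((\<Sum>k\<in>S. (x k + y k)\<^sup>2) / real (m t))
        \<le> sqrt ((\<Sum>k\<in>S. (x k)\<^sup>2) / real (m t)) + sqrt ((\<Sum>k\<in>S. (y k)\<^sup>2) / real (m t))"
      unfolding L2 using L2_set_triangle_ineq[of x y S] r
      by (simp add: add_divide_distrib[symmetric] divide_right_mono)
    also have "\<dots> \<le> sqrt (\<tau> t x) + sqrt (\<tau> t y)"
      using top_mean_sq_ge[OF assms(1) S] top_mean_sq_ge[OF assms(2) S] by (simp add: add_mono)
    finally show "(\<Sum>k\<in>S. (x k + y k)\<^sup>2) / real (m t) \<le> (sqrt (\<tau> t x) + sqrt (\<tau> t y))\<^sup>2"
      by (rule sqrt_le_D)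
  qed
  then show ?thesis by (intro real_le_lsqrt add_nonneg_nonneg real_sqrt_ge_zero top_mean_sq_nonneg assms)
qed

lemma sum_top_mean_sq_le:
  assumes "\<And>S. (\<And>t. t < R \<Longrightarrow> finite (S t) \<and> card (S t) \<le> m t)
      \<Longrightarrow> (\<Sum>t<R. (\<Sum>k\<in>S t. (x k)\<^sup>2) / real (m t)) \<le> B"
  shows "(\<Sum>t<R. \<tau> t x) \<le> B"
  using assms
proof (induction R arbitrary: B)
  case (Suc R)
  have "\<tau> R x \<le> B - (\<Sum>t<R. \<tau> t x)"
  proof (rule top_mean_sq_le)
    fix S :: "nat set" assume S: "finite S" "card S \<le> m R"
    have "(\<Sum>t<R. \<tau> t x) \<le> B - (\<Sum>k\<in>S. (x k)\<^sup>2) / real (m R)"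
    proof (rule Suc.IH)
      fix S' :: "nat \<Rightarrow> nat set" assume S': "\<And>t. t < R \<Longrightarrow> finite (S' t) \<and> card (S' t) \<le> m t"
      have "(\<Sum>t<Suc R. (\<Sum>k\<in>(S'(R := S)) t. (x k)\<^sup>2) / real (m t)) \<le> B"
        by (rule Suc.prems) (use S S' in \<open>auto simp: less_Suc_eq\<close>)
      moreover have "(\<Sum>t<R. (\<Sum>k\<in>(S'(R := S)) t. (x k)\<^sup>2) / real (m t))
          = (\<Sum>t<R. (\<Sum>k\<in>S' t. (x k)\<^sup>2) / real (m t))"
        by (intro sum.cong) auto
      ultimately show "(\<Sum>t<R. (\<Sum>k\<in>S' t. (x k)\<^sup>2) / real (m t)) \<le> B - (\<Sum>k\<in>S. (x k)\<^sup>2) / real (m R)"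
        by simp
    qed
    then show "(\<Sum>k\<in>S. (x k)\<^sup>2) / real (m R) \<le> B - (\<Sum>t<R. \<tau> t x)" by simp
  qed
  then show ?case by simp
qed auto

lemma F_memI: "x \<in> linf \<Longrightarrow> summable (\<lambda>t. \<tau> t x) \<Longrightarrow> x \<in> LF"
  and F_mem_linf: "x \<in> LF \<Longrightarrow> x \<in> linf"
  and F_mem_summable: "x \<in> LF \<Longrightarrow> summable (\<lambda>t. \<tau> t x)"
  unfolding F_space_def by blast+

lemma F_norm_sq: "x \<in> LF \<Longrightarrow> (NF x)\<^sup>2 = (\<Sum>t. \<tau> t x)"
  and F_norm_nonneg: "x \<in> LF \<Longrightarrow> 0 \<le> NF x"
  unfolding F_norm_def
  by (simp_all add: F_mem_summable F_mem_linf suminf_nonneg top_mean_sq_nonneg)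

lemma partial_sum_le_F_norm_sq: "x \<in> LF \<Longrightarrow> (\<Sum>t<R. \<tau> t x) \<le> (NF x)\<^sup>2"
  unfolding F_norm_sq
  by (intro sum_le_suminf F_mem_summable) (auto simp: F_mem_linf top_mean_sq_nonneg)

lemma block_family_le_F_norm_sq:
  assumes "x \<in> LF" "\<And>t. t < R \<Longrightarrow> finite (S t) \<and> card (S t) \<le> m t"
  shows "(\<Sum>t<R. (\<Sum>k\<in>S t. (x k)\<^sup>2) / real (m t)) \<le> (NF x)\<^sup>2"
proof -
  have "(\<Sum>t<R. (\<Sum>k\<in>S t. (x k)\<^sup>2) / real (m t)) \<le> (\<Sum>t<R. \<tau> t x)"
    using assms(2) by (intro sum_mono top_mean_sq_ge F_mem_linf[OF assms(1)]) auto
  also have "\<dots> \<le> (NF x)\<^sup>2" by (rule partial_sum_le_F_norm_sq[OF assms(1)])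
  finally show ?thesis .
qed

lemma weighted_family_sum_le:
  assumes "x \<in> LF" "\<And>t. t < R \<Longrightarrow> finite (S t) \<and> card (S t) \<le> m t"
  shows "\<bar>\<Sum>t<R. \<Sum>k\<in>S t. w k / real (m t) * x k\<bar>
    \<le> sqrt (\<Sum>t<R. (\<Sum>k\<in>S t. (w k)\<^sup>2) / real (m t)) * NF x"
proof -
  define I where "I = Sigma {..<R} S"
  have mpos: "0 < real (m t)" for t using block_pos[of t] by simp
  have Sigma: "(\<Sum>t<R. \<Sum>k\<in>S t. h t k) = (\<Sum>p\<in>I. h (fst p) (snd p))" for h :: "nat \<Rightarrow> nat \<Rightarrow> real"
    unfolding I_def using assms(2) by (subst sum.Sigma) (auto simp: case_prod_beta)
  have W: "0 \<le> sqrt (\<Sum>t<R. (\<Sum>k\<in>S t. (w k)\<^sup>2) / real (m t))"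
    by (intro real_sqrt_ge_zero sum_nonneg divide_nonneg_nonneg) simp_all
  define u where "u p = w (snd p) / sqrt (real (m (fst p)))" for p :: "nat \<times> nat"
  define v where "v p = x (snd p) / sqrt (real (m (fst p)))" for p :: "nat \<times> nat"
  have "\<bar>\<Sum>t<R. \<Sum>k\<in>S t. w k / real (m t) * x k\<bar> = \<bar>\<Sum>p\<in>I. u p * v p\<bar>"
    unfolding Sigma u_def v_def using mpos
    by (intro arg_cong[where f=abs] sum.cong) (auto simp: real_sqrt_mult[symmetric] less_imp_le)
  also have "\<dots> \<le> (\<Sum>p\<in>I. \<bar>u p\<bar> * \<bar>v p\<bar>)" by (simp add: order_trans[OF sum_abs] abs_mult)
  also have "\<dots> \<le> L2_set u I * L2_set v I" by (rule L2_set_mult_ineq)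
  also have "L2_set u I = sqrt (\<Sum>t<R. (\<Sum>k\<in>S t. (w k)\<^sup>2) / real (m t))"
    unfolding L2_set_def u_def sum_divide_distrib Sigma using mpos by (simp add: power_divide less_imp_le)
  also have "L2_set v I \<le> NF x"
  proof -
    have "(\<Sum>p\<in>I. (v p)\<^sup>2) = (\<Sum>t<R. (\<Sum>k\<in>S t. (x k)\<^sup>2) / real (m t))"
      unfolding v_def sum_divide_distrib Sigma using mpos by (simp add: power_divide less_imp_le)
    then show ?thesis
      unfolding L2_set_def using block_family_le_F_norm_sq[OF assms] F_norm_nonneg[OF assms(1)]
      by (simp add: real_le_lsqrt)
  qed
  finally show ?thesis using W by (simp add: mult_left_mono)
qed

lemma F_norm_le_if_partial_sums_le:
  assumes "x \<in> linf" "\<And>R. (\<Sum>t<R. \<tau> t x) \<le> B"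
  shows "x \<in> LF \<and> NF x \<le> sqrt B"
proof
  have "summable (\<lambda>t. \<tau> t x)"
    by (rule summableI_nonneg_bounded[where x=B]) (use assms top_mean_sq_nonneg in auto)
  then show "x \<in> LF" using assms(1) by (rule F_memI[rotated])
  then show "NF x \<le> sqrt B"
    unfolding F_norm_def using assms(2) by (intro real_sqrt_le_mono suminf_le_const F_mem_summable)
qed

lemma F_norm_le_if_top_mean_sq_le:
  assumes "x \<in> LF" "y \<in> linf" "\<And>t. \<tau> t y \<le> \<tau> t x"
  shows "y \<in> LF \<and> NF y \<le> NF x"
proof -
  have "(\<Sum>t<R. \<tau> t y) \<le> (NF x)\<^sup>2" for R
  proof -
    have "(\<Sum>t<R. \<tau> t y) \<le> (\<Sum>t<R. \<tau> t x)" by (rule sum_mono) (rule assms(3))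
    also have "\<dots> \<le> (NF x)\<^sup>2" by (rule partial_sum_le_F_norm_sq[OF assms(1)])
    finally show ?thesis .
  qed
  then have "y \<in> LF \<and> NF y \<le> sqrt ((NF x)\<^sup>2)" by (rule F_norm_le_if_partial_sums_le[OF assms(2)])
  then show ?thesis using F_norm_nonneg[OF assms(1)] by simp
qed

lemma top_mean_sq_le_F_norm_sq: "x \<in> LF \<Longrightarrow> \<tau> t x \<le> (NF x)\<^sup>2"
  using partial_sum_le_F_norm_sq[of x "Suc t"] sum_nonneg[of "{..<t}" "\<lambda>t. \<tau> t x"]
  by (simp add: F_mem_linf top_mean_sq_nonneg)

lemma abs_le_F_norm:
  assumes "x \<in> LF"
  shows "\<bar>x k\<bar> \<le> sqrt (real (m 0)) * NF x"
proof -
  have "(x k)\<^sup>2 / real (m 0) \<le> (NF x)\<^sup>2"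
    using sq_le_top_mean_sq[OF F_mem_linf[OF assms]] top_mean_sq_le_F_norm_sq[OF assms] order_trans
    by blast
  then have "(x k)\<^sup>2 \<le> (sqrt (real (m 0)) * NF x)\<^sup>2"
    using block_pos[of 0] by (simp add: divide_le_eq power_mult_distrib mult.commute)
  moreover have "0 \<le> sqrt (real (m 0)) * NF x" using F_norm_nonneg[OF assms] by simp
  ultimately show ?thesis using power2_le_iff_abs_le by blast
qed

lemma F_zero: "(\<lambda>k. 0) \<in> LF" and F_norm_zero: "NF (\<lambda>k. 0) = 0"
  by (simp_all add: F_space_def F_norm_def linf_zero top_mean_sq_zero)

lemma F_scale: "x \<in> LF \<Longrightarrow> (\<lambda>k. c * x k) \<in> LF"
  by (simp add: F_space_def linf_scale top_mean_sq_scale summable_mult)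

lemma F_norm_scale:
  assumes "x \<in> LF"
  shows "NF (\<lambda>k. c * x k) = \<bar>c\<bar> * NF x"
proof -
  have "(\<Sum>t. \<tau> t (\<lambda>k. c * x k)) = c\<^sup>2 * (\<Sum>t. \<tau> t x)"
    using top_mean_sq_scale[OF F_mem_linf[OF assms]] suminf_mult[OF F_mem_summable[OF assms]] by simp
  then show ?thesis unfolding F_norm_def by (simp add: real_sqrt_mult)
qed

text \<open>Minkowski's inequality in \<open>l\<^sup>2\<close> for the sequences \<open>sqrt (\<tau> t x)\<close>, cut off at \<open>t < R\<close>.\<close>

lemma F_add_norm_triangle:
  assumes "x \<in> LF" "y \<in> LF"
  shows "(\<lambda>k. x k + y k) \<in> LF \<and> NF (\<lambda>k. x k + y k) \<le> NF x + NF y"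
proof -
  have lx: "x \<in> linf" and ly: "y \<in> linf" using assms F_mem_linf by auto
  define a where "a t = sqrt (\<tau> t x)" for t
  define b where "b t = sqrt (\<tau> t y)" for t
  have L2_le: "L2_set (\<lambda>t. sqrt (\<tau> t z)) {..<R} \<le> NF z" if "z \<in> LF" for z R
  proof -
    have "L2_set (\<lambda>t. sqrt (\<tau> t z)) {..<R} = sqrt (\<Sum>t<R. \<tau> t z)"
      unfolding L2_set_def by (simp add: F_mem_linf[OF that] top_mean_sq_nonneg)
    then show ?thesis
      using partial_sum_le_F_norm_sq[OF that, of R] F_norm_nonneg[OF that] by (simp add: real_le_lsqrt)
  qed
  have "(\<Sum>t<R. \<tau> t (\<lambda>k. x k + y k)) \<le> (NF x + NF y)\<^sup>2" for R
  proof -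
    have "(\<Sum>t<R. \<tau> t (\<lambda>k. x k + y k)) \<le> (\<Sum>t<R. (a t + b t)\<^sup>2)"
      unfolding a_def b_def using sqrt_le_D[OF top_mean_sq_triangle[OF lx ly]] by (rule sum_mono)
    also have "\<dots> = (L2_set (\<lambda>t. a t + b t) {..<R})\<^sup>2"
      unfolding L2_set_def by (simp add: sum_nonneg)
    also have "\<dots> \<le> (L2_set a {..<R} + L2_set b {..<R})\<^sup>2"
      by (intro power_mono L2_set_triangle_ineq L2_set_nonneg)
    also have "\<dots> \<le> (NF x + NF y)\<^sup>2"
      unfolding a_def b_def using L2_le[OF assms(1)] L2_le[OF assms(2)]
      by (intro power_mono add_mono add_nonneg_nonneg L2_set_nonneg) auto
    finally show ?thesis .
  qed
  then have "(\<lambda>k. x k + y k) \<in> LF \<and> NF (\<lambda>k. x k + y k) \<le> sqrt ((NF x + NF y)\<^sup>2)"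
    by (rule F_norm_le_if_partial_sums_le[OF linf_add[OF lx ly]])
  then show ?thesis using F_norm_nonneg[OF assms(1)] F_norm_nonneg[OF assms(2)] by simp
qed

lemma F_norm_eq_0: "x \<in> LF \<Longrightarrow> NF x = 0 \<Longrightarrow> x = (\<lambda>k. 0)"
  using abs_le_F_norm by fastforce

sublocale LF: normed_seq_space LF NF
proof
  show "lin_subspace LF"
    unfolding lin_subspace_def using F_zero F_add_norm_triangle F_scale by blast
  show "is_norm_on LF NF"
    unfolding is_norm_on_def
    using F_norm_nonneg F_norm_eq_0 F_norm_zero F_norm_scale F_add_norm_triangle by auto
qed

lemma F_mem_null:
  assumes "x \<in> LF"
  shows "x \<longlonglongrightarrow> 0"
proof (rule ccontr)
  assume "\<not> x \<longlonglongrightarrow> 0"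
  then obtain r where r: "r > 0" "infinite {k. r \<le> \<bar>x k\<bar>}" by (rule infinite_level_set_if_not_null)
  have "r\<^sup>2 \<le> \<tau> t x" for t
  proof -
    obtain S where S: "finite S" "card S = m t" "S \<subseteq> {k. r \<le> \<bar>x k\<bar>}"
      using infinite_arbitrarily_large[OF r(2)] by blast
    have "r\<^sup>2 \<le> (x k)\<^sup>2" if "k \<in> S" for k
      using power_mono[of r "\<bar>x k\<bar>" 2] S(3) that r(1) by auto
    then have "real (m t) * r\<^sup>2 \<le> (\<Sum>k\<in>S. (x k)\<^sup>2)"
      using sum_mono[of S "\<lambda>_. r\<^sup>2" "\<lambda>k. (x k)\<^sup>2"] S(2) by simp
    then have "r\<^sup>2 \<le> (\<Sum>k\<in>S. (x k)\<^sup>2) / real (m t)"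
      using block_pos[of t] by (simp add: le_divide_eq mult.commute)
    also have "\<dots> \<le> \<tau> t x" using top_mean_sq_ge[OF F_mem_linf[OF assms] S(1)] S(2) by simp
    finally show ?thesis .
  qed
  then have "r\<^sup>2 \<le> 0"
    by (intro LIMSEQ_le_const[OF summable_LIMSEQ_zero[OF F_mem_summable[OF assms]]]) auto
  then show False using r(1) by simp
qed

lemma top_mean_sq_le_if_decr_rearr_le:
  assumes "x \<in> linf" "y \<in> LF" "\<And>n. mu x n \<le> mu y n"
  shows "\<tau> t x \<le> \<tau> t y"
proof (rule top_mean_sq_le)
  fix S :: "nat set" assume S: "finite S" "card S \<le> m t"
  have ly: "y \<in> linf" using F_mem_linf[OF assms(2)] .
  obtain S' where S': "finite S'" "card S' = card S"
    "(\<Sum>i<card S. (mu y i)\<^sup>2) \<le> (\<Sum>k\<in>S'. (y k)\<^sup>2)"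
    using decr_rearr_sum_squares_attained[OF ly F_mem_null[OF assms(2)]] by blast
  have "(\<Sum>k\<in>S. (x k)\<^sup>2) \<le> (\<Sum>i<card S. (mu x i)\<^sup>2)"
    by (rule sum_squares_le_decr_rearr[OF assms(1) S(1)])
  also have "\<dots> \<le> (\<Sum>i<card S. (mu y i)\<^sup>2)"
    by (intro sum_mono power_mono assms(3) decr_rearr_nonneg[OF assms(1)])
  also have "\<dots> \<le> (\<Sum>k\<in>S'. (y k)\<^sup>2)" by (rule S'(3))
  finally have "(\<Sum>k\<in>S. (x k)\<^sup>2) / real (m t) \<le> (\<Sum>k\<in>S'. (y k)\<^sup>2) / real (m t)"
    by (simp add: divide_right_mono)
  also have "\<dots> \<le> \<tau> t y" using top_mean_sq_ge[OF ly S'(1)] S' S by simp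
  finally show "(\<Sum>k\<in>S. (x k)\<^sup>2) / real (m t) \<le> \<tau> t y" .
qed

lemma F_mem_if_decr_rearr_le:
  "x \<in> linf \<Longrightarrow> y \<in> LF \<Longrightarrow> (\<And>n. mu x n \<le> mu y n) \<Longrightarrow> x \<in> LF \<and> NF x \<le> NF y"
  by (intro F_norm_le_if_top_mean_sq_le top_mean_sq_le_if_decr_rearr_le)

lemma F_mono: "x \<in> LF \<Longrightarrow> (\<And>k. \<bar>y k\<bar> \<le> \<bar>x k\<bar>) \<Longrightarrow> y \<in> LF \<and> NF y \<le> NF x"
  by (intro F_norm_le_if_top_mean_sq_le top_mean_sq_mono F_mem_linf linf_mono)

lemma F_norm_le_pointwise_limit:
  assumes "\<And>j. X j \<in> LF" "\<And>k. (\<lambda>j. X j k) \<longlonglongrightarrow> x k" "\<And>j. M \<le> j \<Longrightarrow> NF (X j) \<le> B"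
  shows "x \<in> LF \<and> NF x \<le> B"
proof -
  have B: "0 \<le> B" using F_norm_nonneg[OF assms(1)] assms(3)[of M] by (rule order_trans) simp
  have "\<bar>x k\<bar> \<le> sqrt (real (m 0)) * B" for k
  proof (rule LIMSEQ_le_const2[OF tendsto_rabs[OF assms(2)]], intro exI allI impI)
    fix j assume "M \<le> j"
    then show "\<bar>X j k\<bar> \<le> sqrt (real (m 0)) * B"
      using abs_le_F_norm[OF assms(1)] assms(3) mult_left_mono[of "NF (X j)" B] order_trans
      by (metis real_sqrt_ge_zero of_nat_0_le_iff)
  qed
  then have lx: "x \<in> linf" by (rule linfI)
  have "(\<Sum>t<R. \<tau> t x) \<le> B\<^sup>2" for R
  proof (rule sum_top_mean_sq_le)
    fix S :: "nat \<Rightarrow> nat set" assume S: "\<And>t. t < R \<Longrightarrow> finite (S t) \<and> card (S t) \<le> m t"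
    have lim: "(\<lambda>j. \<Sum>t<R. (\<Sum>k\<in>S t. (X j k)\<^sup>2) / real (m t)) \<longlonglongrightarrow> (\<Sum>t<R. (\<Sum>k\<in>S t. (x k)\<^sup>2) / real (m t))"
      using block_pos by (intro tendsto_intros assms(2)) (simp add: Suc_le_eq)
    have bound: "(\<Sum>t<R. (\<Sum>k\<in>S t. (X j k)\<^sup>2) / real (m t)) \<le> B\<^sup>2" if "M \<le> j" for j
    proof -
      have "(\<Sum>t<R. (\<Sum>k\<in>S t. (X j k)\<^sup>2) / real (m t)) \<le> (NF (X j))\<^sup>2"
        by (rule block_family_le_F_norm_sq[OF assms(1) S])
      also have "\<dots> \<le> B\<^sup>2" using assms(3)[OF that] F_norm_nonneg[OF assms(1)] by (rule power_mono)
      finally show ?thesis .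
    qed
    show "(\<Sum>t<R. (\<Sum>k\<in>S t. (x k)\<^sup>2) / real (m t)) \<le> B\<^sup>2"
      by (rule LIMSEQ_le_const2[OF lim]) (use bound in blast)
  qed
  then have "x \<in> LF \<and> NF x \<le> sqrt (B\<^sup>2)" by (rule F_norm_le_if_partial_sums_le[OF lx])
  with B show ?thesis by simp
qed

lemma F_Cauchy_coord:
  assumes XL: "\<And>n. X n \<in> LF"
    and cauchy: "\<And>e. e > 0 \<Longrightarrow> \<exists>M. \<forall>i\<ge>M. \<forall>j\<ge>M. NF (\<lambda>k. X i k - X j k) < e"
  shows "Cauchy (\<lambda>n. X n k)"
proof (rule CauchyI)
  fix e :: real assume "e > 0"
  define c where "c = sqrt (real (m 0))"
  have c: "c > 0" unfolding c_def using block_pos[of 0] by simp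
  obtain M where M: "\<And>i j. M \<le> i \<Longrightarrow> M \<le> j \<Longrightarrow> NF (\<lambda>k. X i k - X j k) < e / c"
    using cauchy[of "e / c"] \<open>e > 0\<close> c by auto
  have "norm (X i k - X j k) < e" if "M \<le> i" "M \<le> j" for i j
  proof -
    have "\<bar>X i k - X j k\<bar> \<le> c * NF (\<lambda>k. X i k - X j k)"
      unfolding c_def using abs_le_F_norm[OF LF.diff_mem[OF XL XL]] .
    also have "\<dots> < c * (e / c)" using mult_strict_left_mono[OF M[OF that] c] .
    finally show ?thesis using c by simp
  qed
  then show "\<exists>M. \<forall>i\<ge>M. \<forall>j\<ge>M. norm (X i k - X j k) < e" by blast
qed

lemma F_complete: "complete_wrt LF NF"
  unfolding complete_wrt_def
proof (intro allI impI, elim conjE)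
  fix X :: "nat \<Rightarrow> seq"
  assume XL: "\<forall>n. X n \<in> LF"
    and cauchy: "\<forall>e>0. \<exists>M. \<forall>i\<ge>M. \<forall>j\<ge>M. NF (\<lambda>k. X i k - X j k) < e"
  have diffL: "(\<lambda>k. X i k - X j k) \<in> LF" for i j using XL by (simp add: LF.diff_mem)
  have "Cauchy (\<lambda>n. X n k)" for k using F_Cauchy_coord XL cauchy by blast
  then obtain x where conv: "\<And>k. (\<lambda>n. X n k) \<longlonglongrightarrow> x k"
    unfolding Cauchy_convergent_iff convergent_def by metis
  have close: "\<exists>M. \<forall>n\<ge>M. (\<lambda>k. X n k - x k) \<in> LF \<and> NF (\<lambda>k. X n k - x k) \<le> e" if "e > 0" for e
  proof -
    obtain M where M: "\<And>i j. M \<le> i \<Longrightarrow> M \<le> j \<Longrightarrow> NF (\<lambda>k. X i k - X j k) < e"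
      using cauchy \<open>e > 0\<close> by blast
    have "(\<lambda>k. X n k - x k) \<in> LF \<and> NF (\<lambda>k. X n k - x k) \<le> e" if "M \<le> n" for n
      by (rule F_norm_le_pointwise_limit[of "\<lambda>j k. X n k - X j k" _ M])
        (use diffL conv M that in \<open>auto intro: tendsto_intros less_imp_le\<close>)
    then show ?thesis by blast
  qed
  then obtain M1 where "(\<lambda>k. X M1 k - x k) \<in> LF" using zero_less_one by blast
  then have "x \<in> LF" using LF.diff_mem[of "X M1" "\<lambda>k. X M1 k - x k"] XL by simp
  moreover have "(\<lambda>n. NF (\<lambda>k. X n k - x k)) \<longlonglongrightarrow> 0"
  proof (rule LIMSEQ_I)
    fix r :: real assume "r > 0"
    then obtain M where "\<And>n. M \<le> n \<Longrightarrow> (\<lambda>k. X n k - x k) \<in> LF \<and> NF (\<lambda>k. X n k - x k) \<le> r / 2"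
      using close[of "r / 2"] by auto
    then have "norm (NF (\<lambda>k. X n k - x k) - 0) < r" if "M \<le> n" for n
      using F_norm_nonneg \<open>r > 0\<close> that by fastforce
    then show "\<exists>M. \<forall>n\<ge>M. norm (NF (\<lambda>k. X n k - x k) - 0) < r" by blast
  qed
  ultimately show "\<exists>x\<in>LF. (\<lambda>n. NF (\<lambda>k. X n k - x k)) \<longlonglongrightarrow> 0" by blast
qed

theorem F_symmetric: "symmetric_seq_space LF NF"
  unfolding symmetric_seq_space_def
  using LF.lin_subspace LF.norm F_mem_linf F_complete F_mem_if_decr_rearr_le by blast

section \<open>Reflexivity of \<open>l\<^sub>F\<close>\<close>

lemma F_tail: "x \<in> LF \<Longrightarrow> tail n x \<in> LF \<and> NF (tail n x) \<le> NF x"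
  by (rule F_mono) (auto simp: tail_def)

lemma F_norm_tail_tendsto_0:
  assumes "x \<in> LF"
  shows "(\<lambda>n. NF (tail n x)) \<longlonglongrightarrow> 0"
proof (rule LIMSEQ_I)
  fix \<epsilon> :: real assume "\<epsilon> > 0"
  obtain R where R: "\<bar>\<Sum>t. \<tau> (t + R) x\<bar> < \<epsilon>\<^sup>2 / 2"
    using suminf_exist_split[of "\<epsilon>\<^sup>2 / 2" "\<lambda>t. \<tau> t x"] F_mem_summable[OF assms] \<open>\<epsilon> > 0\<close> by auto
  define \<beta> where "\<beta> = \<epsilon> / (2 * sqrt (real R + 1))"
  have "\<beta> > 0" unfolding \<beta>_def using \<open>\<epsilon> > 0\<close> by simp
  have "real R * \<beta>\<^sup>2 = \<epsilon>\<^sup>2 / 4 * (real R / (real R + 1))"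
    unfolding \<beta>_def by (simp add: power_divide power_mult_distrib)
  also have "\<dots> \<le> \<epsilon>\<^sup>2 / 4" by (rule mult_left_le) simp_all
  finally have R\<beta>: "real R * \<beta>\<^sup>2 \<le> \<epsilon>\<^sup>2 / 4" .
  obtain N where N: "\<And>k. N \<le> k \<Longrightarrow> \<bar>x k\<bar> < \<beta>"
    using LIMSEQ_D[OF F_mem_null[OF assms] \<open>\<beta> > 0\<close>] by auto
  have "NF (tail n x) < \<epsilon>" if "N \<le> n" for n
  proof -
    have yL: "tail n x \<in> LF" using F_tail[OF assms] by blast
    have yb: "\<bar>tail n x k\<bar> \<le> \<beta>" for k using N[of k] that \<open>\<beta> > 0\<close> by (auto simp: tail_def)
    have "(\<Sum>t<R. \<tau> t (tail n x)) \<le> real R * \<beta>\<^sup>2"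
      using sum_mono[of "{..<R}" "\<lambda>t. \<tau> t (tail n x)" "\<lambda>_. \<beta>\<^sup>2"] top_mean_sq_le_sq_bound[OF yb] by simp
    moreover have "(\<Sum>t. \<tau> (t + R) (tail n x)) \<le> (\<Sum>t. \<tau> (t + R) x)"
      by (intro suminf_le summable_ignore_initial_segment F_mem_summable yL assms
          top_mean_sq_mono[OF F_mem_linf[OF assms]]) (simp add: tail_def)
    moreover have "(\<Sum>t. \<tau> t (tail n x)) = (\<Sum>t. \<tau> (t + R) (tail n x)) + (\<Sum>t<R. \<tau> t (tail n x))"
      by (rule suminf_split_initial_segment[OF F_mem_summable[OF yL]])
    ultimately have "(\<Sum>t. \<tau> t (tail n x)) < \<epsilon>\<^sup>2" using R R\<beta> by linarith
    then show ?thesis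
      unfolding F_norm_def using real_sqrt_less_mono \<open>\<epsilon> > 0\<close> by fastforce
  qed
  then show "\<exists>N. \<forall>n\<ge>N. norm (NF (tail n x) - 0) < \<epsilon>"
    using F_norm_nonneg F_tail[OF assms] by fastforce
qed

lemma F_norm_sq_sum_disjoint:
  fixes Y :: "nat \<Rightarrow> seq" and r :: nat
  assumes YL: "\<And>j. j < r \<Longrightarrow> Y j \<in> LF"
    and disj: "\<And>i j k. i < r \<Longrightarrow> j < r \<Longrightarrow> i \<noteq> j \<Longrightarrow> Y i k = 0 \<or> Y j k = 0"
  shows "(\<lambda>k. \<Sum>j<r. Y j k) \<in> LF \<and> (NF (\<lambda>k. \<Sum>j<r. Y j k))\<^sup>2 \<le> (\<Sum>j<r. (NF (Y j))\<^sup>2)"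
proof -
  let ?s = "\<lambda>k. \<Sum>j<r. Y j k"
  have "(\<lambda>k. \<Sum>j<r. 1 * Y j k) \<in> LF" by (rule LF.lincomb_mem) (use YL in auto)
  then have sL: "?s \<in> LF" by simp
  have sq: "(?s k)\<^sup>2 = (\<Sum>j<r. (Y j k)\<^sup>2)" for k
    using square_sum_disjoint[of "{..<r}" "\<lambda>j. Y j k"] disj by simp
  have \<tau>_le: "\<tau> t ?s \<le> (\<Sum>j<r. \<tau> t (Y j))" for t
  proof (rule top_mean_sq_le)
    fix S :: "nat set" assume S: "finite S" "card S \<le> m t"
    have "(\<Sum>k\<in>S. (?s k)\<^sup>2) / real (m t) = (\<Sum>j<r. (\<Sum>k\<in>S. (Y j k)\<^sup>2) / real (m t))"
      unfolding sq sum_divide_distrib[symmetric] by (subst sum.swap) simp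
    also have "\<dots> \<le> (\<Sum>j<r. \<tau> t (Y j))"
      by (intro sum_mono top_mean_sq_ge F_mem_linf YL S) simp
    finally show "(\<Sum>k\<in>S. (?s k)\<^sup>2) / real (m t) \<le> (\<Sum>j<r. \<tau> t (Y j))" .
  qed
  have "(\<Sum>t<R. \<tau> t ?s) \<le> (\<Sum>j<r. (NF (Y j))\<^sup>2)" for R
  proof -
    have "(\<Sum>t<R. \<tau> t ?s) \<le> (\<Sum>t<R. \<Sum>j<r. \<tau> t (Y j))" by (intro sum_mono \<tau>_le)
    also have "\<dots> = (\<Sum>j<r. \<Sum>t<R. \<tau> t (Y j))" by (rule sum.swap)
    also have "\<dots> \<le> (\<Sum>j<r. (NF (Y j))\<^sup>2)" by (intro sum_mono partial_sum_le_F_norm_sq YL) simp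
    finally show ?thesis .
  qed
  then have "NF ?s \<le> sqrt (\<Sum>j<r. (NF (Y j))\<^sup>2)"
    using F_norm_le_if_partial_sums_le[OF F_mem_linf[OF sL]] by blast
  from power_mono[OF this F_norm_nonneg[OF sL], of 2]
  have "(NF ?s)\<^sup>2 \<le> (\<Sum>j<r. (NF (Y j))\<^sup>2)" by (simp add: sum_nonneg)
  with sL show ?thesis by blast
qed

text \<open>Cutting the tail of \<open>x\<close> far enough out changes \<open>f\<close> by less than \<open>\<epsilon>/2\<close>, by order
  continuity of the norm of \<open>l\<^sub>F\<close>.\<close>

lemma dual_large_on_block:
  assumes f: "f \<in> dual_space LF NF" and C: "0 \<le> C" "\<And>x. x \<in> LF \<Longrightarrow> \<bar>f x\<bar> \<le> C * NF x"
    and "\<epsilon> > 0" and x: "x \<in> LF" "NF x \<le> 1" "\<bar>f (tail N x)\<bar> > \<epsilon>"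
  shows "\<exists>M y. N \<le> M \<and> y \<in> LF \<and> NF y \<le> 1 \<and> (\<forall>j. j < N \<or> M \<le> j \<longrightarrow> y j = 0) \<and> f y > \<epsilon> / 2"
proof -
  define w where "w = tail N x"
  have wL: "w \<in> LF" unfolding w_def using F_tail[OF x(1)] by blast
  define \<delta> where "\<delta> = \<epsilon> / (2 * (C + 1))"
  have "\<delta> > 0" unfolding \<delta>_def using \<open>\<epsilon> > 0\<close> C by simp
  then obtain M0 where "\<forall>n\<ge>M0. \<bar>NF (tail n w)\<bar> < \<delta>"
    using LIMSEQ_D[OF F_norm_tail_tendsto_0[OF wL]] by auto
  then have M0: "\<And>n. M0 \<le> n \<Longrightarrow> NF (tail n w) < \<delta>" by (meson abs_ge_self le_less_trans)
  define M where "M = max N M0"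
  have tML: "tail M w \<in> LF" using F_tail[OF wL] by blast
  have "\<bar>f (tail M w)\<bar> \<le> C * \<delta>"
    using C(2)[OF tML] mult_left_mono[OF less_imp_le[OF M0[of M]] C(1)] by (simp add: M_def)
  also have "C * \<delta> < \<epsilon> / 2" unfolding \<delta>_def using \<open>\<epsilon> > 0\<close> C by (simp add: field_simps)
  finally have small: "\<bar>f (tail M w)\<bar> < \<epsilon> / 2" .
  define y0 where "y0 = (\<lambda>j. w j - tail M w j)"
  have y0L: "y0 \<in> LF" unfolding y0_def using wL tML by (rule LF.diff_mem)
  have "f y0 = f w - f (tail M w)" unfolding y0_def by (rule LF.dual_diff[OF f wL tML])
  moreover have "\<bar>f w\<bar> > \<epsilon>" using x(3) w_def by simp
  ultimately have big: "\<bar>f y0\<bar> > \<epsilon> / 2" using small by linarith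
  have "\<bar>y0 k\<bar> \<le> \<bar>x k\<bar>" for k unfolding y0_def w_def tail_def by auto
  then have "NF y0 \<le> NF x" using F_mono[OF x(1)] by blast
  with x(2) have "NF y0 \<le> 1" by simp
  define c :: real where "c = sgn (f y0)"
  have "f (\<lambda>j. c * y0 j) = c * f y0" by (rule LF.dual_scale[OF f y0L])
  then have "f (\<lambda>j. c * y0 j) = \<bar>f y0\<bar>" unfolding c_def by (simp add: abs_sgn[of "f y0"] mult.commute)
  moreover have "NF (\<lambda>j. c * y0 j) = NF y0"
    unfolding c_def using F_norm_scale[OF y0L] big \<open>\<epsilon> > 0\<close>
    by (auto simp: abs_sgn_eq)
  moreover have "c * y0 j = 0" if "j < N \<or> M \<le> j" for j
    using that unfolding y0_def w_def tail_def M_def by auto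
  ultimately show ?thesis
    using F_scale[OF y0L, of c] \<open>NF y0 \<le> 1\<close> big M_def by (intro exI[of _ M] exI[of _ "\<lambda>j. c * y0 j"]) auto
qed

lemma dual_sum_disjoint_le:
  fixes Z :: "nat \<Rightarrow> seq" and r :: nat
  assumes f: "f \<in> dual_space LF NF" and C: "0 \<le> C" "\<And>x. x \<in> LF \<Longrightarrow> \<bar>f x\<bar> \<le> C * NF x"
    and Z: "\<And>j. j < r \<Longrightarrow> Z j \<in> LF" "\<And>j. j < r \<Longrightarrow> NF (Z j) \<le> 1"
    and disj: "\<And>i j k. i < r \<Longrightarrow> j < r \<Longrightarrow> i \<noteq> j \<Longrightarrow> Z i k = 0 \<or> Z j k = 0"
  shows "(\<Sum>j<r. f (Z j)) \<le> C * sqrt (real r)"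
proof -
  define s where "s = (\<lambda>k. \<Sum>j<r. 1 * Z j k)"
  have "s \<in> LF \<and> (NF s)\<^sup>2 \<le> (\<Sum>j<r. (NF (Z j))\<^sup>2)"
    unfolding s_def using F_norm_sq_sum_disjoint[OF Z(1) disj] by simp
  moreover have "(\<Sum>j<r. (NF (Z j))\<^sup>2) \<le> (\<Sum>j<r. 1)"
    by (intro sum_mono power_le_one F_norm_nonneg Z) simp_all
  ultimately have sL: "s \<in> LF" and "NF s \<le> sqrt (real r)" by (auto intro: real_le_rsqrt)
  have "(\<Sum>j<r. f (Z j)) = f s"
    using LF.dual_lincomb[OF f, of "{..<r}" Z "\<lambda>_. 1"] Z(1) by (simp add: s_def)
  also have "\<dots> \<le> C * NF s" using C(2)[OF sL] by simp
  also have "\<dots> \<le> C * sqrt (real r)" using \<open>NF s \<le> sqrt (real r)\<close> C(1) by (rule mult_left_mono)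
  finally show ?thesis .
qed

text \<open>Otherwise there would be unit vectors on consecutive disjoint blocks on which \<open>f\<close> exceeds
  \<open>\<epsilon>/2\<close>; summing \<open>r\<close> of them gives a value \<open>r \<epsilon>/2\<close> at a vector of norm at most \<open>sqrt r\<close>.\<close>

lemma dual_small_on_tails:
  assumes f: "f \<in> dual_space LF NF" and "\<epsilon> > 0"
  shows "\<exists>N. \<forall>x\<in>LF. NF x \<le> 1 \<longrightarrow> \<bar>f (tail N x)\<bar> \<le> \<epsilon>"
proof (rule ccontr)
  assume contra: "\<not> ?thesis"
  obtain C where C: "0 \<le> C" "\<And>x. x \<in> LF \<Longrightarrow> \<bar>f x\<bar> \<le> C * NF x"
    by (rule LF.dual_bounded[OF f]) blast
  have "\<exists>M y. N \<le> M \<and> y \<in> LF \<and> NF y \<le> 1 \<and> (\<forall>j. j < N \<or> M \<le> j \<longrightarrow> y j = 0) \<and> f y > \<epsilon> / 2"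
    for N
  proof -
    obtain x where "x \<in> LF" "NF x \<le> 1" "\<bar>f (tail N x)\<bar> > \<epsilon>"
      using contra by (auto simp: not_le)
    then show ?thesis using dual_large_on_block[OF f C \<open>\<epsilon> > 0\<close>] by blast
  qed
  then obtain M Y where MY: "\<And>N. N \<le> M N" "\<And>N. Y N \<in> LF" "\<And>N. NF (Y N) \<le> 1"
      "\<And>N j. j < N \<or> M N \<le> j \<Longrightarrow> Y N j = 0" "\<And>N. f (Y N) > \<epsilon> / 2"
    by metis
  define b where "b j = (M ^^ j) 0" for j
  have b_Suc: "b (Suc j) = M (b j)" for j unfolding b_def by simp
  have inc: "incseq b" by (rule incseq_SucI) (simp add: b_Suc MY(1))
  define Z where "Z j = Y (b j)" for j
  have supp: "b i \<le> k \<and> k < b (Suc i)" if "Z i k \<noteq> 0" for i k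
  proof -
    have "\<not> (k < b i \<or> M (b i) \<le> k)" using MY(4)[where N="b i" and j=k] that by (auto simp: Z_def)
    then show ?thesis by (simp add: b_Suc not_less)
  qed
  have disj: "Z i k = 0 \<or> Z j k = 0" if "i \<noteq> j" for i j k
  proof (rule ccontr)
    assume "\<not> ?thesis"
    then have "b i \<le> k" "k < b (Suc i)" "b j \<le> k" "k < b (Suc j)" using supp by blast+
    moreover have "b (Suc i) \<le> b j \<or> b (Suc j) \<le> b i"
      using \<open>i \<noteq> j\<close> incseqD[OF inc, of "Suc i" j] incseqD[OF inc, of "Suc j" i] by linarith
    ultimately show False by linarith
  qed
  obtain r :: nat where r: "C * sqrt (real r) < real r * (\<epsilon> / 2)"
    using exists_linear_gt_sqrt[of "\<epsilon> / 2" C] \<open>\<epsilon> > 0\<close> by auto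
  have "real r * (\<epsilon> / 2) \<le> (\<Sum>j<r. f (Z j))"
    using sum_mono[of "{..<r}" "\<lambda>_. \<epsilon> / 2" "\<lambda>j. f (Z j)"] MY(5) by (simp add: Z_def less_imp_le)
  also have "\<dots> \<le> C * sqrt (real r)"
    by (rule dual_sum_disjoint_le[OF f C]) (use MY(2,3) disj in \<open>simp_all add: Z_def\<close>)
  finally show False using r by simp
qed

lemma coord_functional_mem_dual_F: "coord_functional LF k \<in> dual_space LF NF"
  using abs_le_F_norm by (rule LF.coord_functional_mem_dual)

end

locale summable_block_weights = block_weights +
  assumes summable_inverse: "summable (\<lambda>t. 1 / real (m t))"
begin

lemma F_mem_finite_support:
  assumes "finite K" "\<And>k. k \<notin> K \<Longrightarrow> x k = 0"
  shows "x \<in> LF"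
proof -
  have lx: "x \<in> linf"
  proof (rule linfI)
    fix k show "\<bar>x k\<bar> \<le> (\<Sum>j\<in>K. \<bar>x j\<bar>)"
      using assms by (cases "k \<in> K") (auto intro: member_le_sum sum_nonneg)
  qed
  have "\<tau> t x \<le> (\<Sum>k\<in>K. (x k)\<^sup>2) * (1 / real (m t))" for t
  proof (rule top_mean_sq_le)
    fix S :: "nat set" assume "finite S"
    have "(\<Sum>k\<in>S. (x k)\<^sup>2) = (\<Sum>k\<in>S \<inter> K. (x k)\<^sup>2)"
      using assms(2) \<open>finite S\<close> by (intro sum.mono_neutral_right) auto
    also have "\<dots> \<le> (\<Sum>k\<in>K. (x k)\<^sup>2)" using assms(1) by (intro sum_mono2) auto
    finally show "(\<Sum>k\<in>S. (x k)\<^sup>2) / real (m t) \<le> (\<Sum>k\<in>K. (x k)\<^sup>2) * (1 / real (m t))"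
      by (simp add: divide_right_mono)
  qed
  then have "summable (\<lambda>t. \<tau> t x)"
    by (intro summable_comparison_test'[OF summable_mult[OF summable_inverse]])
      (simp add: top_mean_sq_nonneg lx)
  with lx show ?thesis by (rule F_memI)
qed

lemma indicator_mem_F: "indicator {k} \<in> LF"
  by (rule F_mem_finite_support[of "{k}"]) auto

lemma trunc_mem_F: "trunc n x \<in> LF"
  by (rule F_mem_finite_support[of "{..<n}"]) (auto simp: trunc_def)

lemma dual_trunc:
  assumes "f \<in> dual_space LF NF"
  shows "f (trunc n x) = (\<Sum>k<n. f (indicator {k}) * x k)"
  unfolding trunc_eq_sum_indicator
  using LF.dual_lincomb[OF assms, of "{..<n}" "\<lambda>k. indicator {k}" x] indicator_mem_F
  by (simp add: mult.commute)

lemma dual_trunc_plus_tail: "f \<in> dual_space LF NF \<Longrightarrow> x \<in> LF \<Longrightarrow> f x = f (trunc n x) + f (tail n x)"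
  using LF.dual_add[of f "trunc n x" "tail n x"] trunc_mem_F F_tail by (simp add: trunc_plus_tail)

lemma trunc_functional_mem_dual: "trunc_functional LF f n \<in> dual_space LF NF"
  unfolding trunc_functional_def[abs_def]
  by (intro LF.dual_space_sum LF.dual_space_scale coord_functional_mem_dual_F) simp

lemma trunc_functional_eq:
  "f \<in> dual_space LF NF \<Longrightarrow> x \<in> LF \<Longrightarrow> trunc_functional LF f n x = f (trunc n x)"
  by (simp add: trunc_functional_def coord_functional_def dual_trunc)

lemma dual_minus_trunc_functional_small:
  assumes "f \<in> dual_space LF NF" "\<epsilon> > 0"
  obtains N where "\<And>n. N \<le> n \<Longrightarrow> dual_norm LF NF (\<lambda>x. f x - trunc_functional LF f n x) \<le> \<epsilon>"
proof -
  obtain N where N: "\<And>x. x \<in> LF \<Longrightarrow> NF x \<le> 1 \<Longrightarrow> \<bar>f (tail N x)\<bar> \<le> \<epsilon>"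
    using dual_small_on_tails[OF assms] by blast
  have "dual_norm LF NF (\<lambda>x. f x - trunc_functional LF f n x) \<le> \<epsilon>" if "N \<le> n" for n
  proof (rule LF.dual_norm_le)
    fix x assume x: "x \<in> LF" "NF x \<le> 1"
    have "f x - trunc_functional LF f n x = f (tail n x)"
      using dual_trunc_plus_tail[OF assms(1) x(1), of n] trunc_functional_eq[OF assms(1) x(1)] by simp
    also have "tail n x = tail N (tail n x)" using that by (intro ext) (simp add: tail_def)
    finally show "\<bar>f x - trunc_functional LF f n x\<bar> \<le> \<epsilon>" using N F_tail[OF x(1), of n] x(2) by force
  qed (use assms(2) in simp)
  then show thesis by (rule that)
qed

end

locale F_bidual = summable_block_weights m + bidual_functional "F_space m" "F_norm m" \<Phi>
  for m :: "nat \<Rightarrow> nat" and \<Phi> :: "(seq \<Rightarrow> real) \<Rightarrow> real"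
begin

definition bidual_coords :: seq where
  "bidual_coords k = \<Phi> (coord_functional LF k)"

text \<open>Test \<open>\<Phi>\<close> against the functional \<open>g\<close> sending \<open>x\<close> to the sum of \<open>z\<^sub>k x\<^sub>k / m\<^sub>t\<close> over the
  family: by Cauchy-Schwarz \<open>g\<close> has norm at most \<open>sqrt A\<close>, while \<open>\<Phi> g = A\<close>, where \<open>A\<close> is the
  left-hand side.\<close>

lemma bidual_coords_family_bound:
  assumes C: "0 \<le> C" "\<And>f. f \<in> dual_space LF NF \<Longrightarrow> \<bar>\<Phi> f\<bar> \<le> C * dual_norm LF NF f"
    and S: "\<And>t. t < R \<Longrightarrow> finite (S t) \<and> card (S t) \<le> m t"
  shows "(\<Sum>t<R. (\<Sum>k\<in>S t. (bidual_coords k)\<^sup>2) / real (m t)) \<le> C\<^sup>2"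
proof -
  let ?z = bidual_coords
  define A where "A = (\<Sum>t<R. (\<Sum>k\<in>S t. (?z k)\<^sup>2) / real (m t))"
  have A0: "0 \<le> A" unfolding A_def by (intro sum_nonneg divide_nonneg_nonneg) auto
  define g where "g x = (\<Sum>t<R. \<Sum>k\<in>S t. ?z k / real (m t) * coord_functional LF k x)" for x
  have inner: "(\<lambda>x. \<Sum>k\<in>S t. ?z k / real (m t) * coord_functional LF k x) \<in> dual_space LF NF"
    if "t < R" for t
    using S[OF that] by (intro LF.dual_space_sum LF.dual_space_scale coord_functional_mem_dual_F) simp
  have gD: "g \<in> dual_space LF NF" unfolding g_def[abs_def] by (rule LF.dual_space_sum[OF finite_lessThan], rule inner) simp
  have "\<Phi> g = (\<Sum>t<R. \<Phi> (\<lambda>x. \<Sum>k\<in>S t. ?z k / real (m t) * coord_functional LF k x))"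
    unfolding g_def[abs_def] using inner by (intro bidual_sum) auto
  also have "\<dots> = (\<Sum>t<R. \<Sum>k\<in>S t. ?z k / real (m t) * ?z k)"
  proof (rule sum.cong[OF refl])
    fix t assume "t \<in> {..<R}"
    then show "\<Phi> (\<lambda>x. \<Sum>k\<in>S t. ?z k / real (m t) * coord_functional LF k x)
        = (\<Sum>k\<in>S t. ?z k / real (m t) * ?z k)"
      using S[of t] unfolding bidual_coords_def by (intro bidual_lincomb coord_functional_mem_dual_F) auto
  qed
  also have "\<dots> = A" unfolding A_def by (simp add: sum_divide_distrib power2_eq_square)
  finally have \<Phi>gA: "\<Phi> g = A" .
  have gx: "\<bar>g x\<bar> \<le> sqrt A * NF x" if "x \<in> LF" for x
    using weighted_family_sum_le[OF that S, where w = ?z] that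
    unfolding g_def A_def coord_functional_def by simp
  have "dual_norm LF NF g \<le> sqrt A"
  proof (rule LF.dual_norm_le)
    show "0 \<le> sqrt A" using A0 by simp
    fix x assume "x \<in> LF" "NF x \<le> 1"
    then have "sqrt A * NF x \<le> sqrt A" using A0 by (simp add: mult_left_le)
    with gx[OF \<open>x \<in> LF\<close>] show "\<bar>g x\<bar> \<le> sqrt A" by linarith
  qed
  then have "A \<le> C * sqrt A" using C(2)[OF gD] \<Phi>gA mult_left_mono[OF _ C(1)] by fastforce
  then have "sqrt A * sqrt A \<le> C * sqrt A" using A0 by simp
  then have "sqrt A \<le> C"
  proof (cases "A = 0")
    case False
    then have "0 < sqrt A" using A0 by simp
    with \<open>sqrt A * sqrt A \<le> C * sqrt A\<close> show ?thesis by (rule mult_right_le_imp_le)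
  qed (simp add: C(1))
  then show ?thesis unfolding A_def[symmetric] using A0 sqrt_le_D by blast
qed

lemma bidual_coords_mem: "bidual_coords \<in> LF"
proof -
  obtain C where C: "0 \<le> C" "\<And>f. f \<in> dual_space LF NF \<Longrightarrow> \<bar>\<Phi> f\<bar> \<le> C * dual_norm LF NF f"
    by (rule bidual_bound) blast
  have "(bidual_coords k)\<^sup>2 / real (m 0) \<le> C\<^sup>2" for k
    using bidual_coords_family_bound[OF C, of 1 "\<lambda>_. {k}"] block_pos by simp
  then have "(bidual_coords k)\<^sup>2 \<le> (sqrt (real (m 0)) * C)\<^sup>2" for k
    using block_pos[of 0] by (simp add: divide_le_eq power_mult_distrib mult.commute)
  then have "\<bar>bidual_coords k\<bar> \<le> sqrt (real (m 0)) * C" for k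
    using power2_le_iff_abs_le[of "sqrt (real (m 0)) * C"] C(1) by simp
  then have "bidual_coords \<in> linf" by (rule linfI)
  moreover have "(\<Sum>t<R. \<tau> t bidual_coords) \<le> C\<^sup>2" for R
    by (rule sum_top_mean_sq_le) (rule bidual_coords_family_bound[OF C])
  ultimately show ?thesis using F_norm_le_if_partial_sums_le by blast
qed

lemma bidual_trunc_functional:
  assumes "f \<in> dual_space LF NF"
  shows "\<Phi> (trunc_functional LF f n) = f (trunc n bidual_coords)"
proof -
  have "\<Phi> (trunc_functional LF f n) = (\<Sum>k<n. f (indicator {k}) * bidual_coords k)"
    unfolding trunc_functional_def[abs_def] bidual_coords_def
    by (intro bidual_lincomb coord_functional_mem_dual_F) simp
  then show ?thesis by (simp add: dual_trunc[OF assms])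
qed

lemma bidual_eq_eval:
  assumes f: "f \<in> dual_space LF NF"
  shows "\<Phi> f = f bidual_coords"
proof -
  let ?z = bidual_coords
  have zL: "?z \<in> LF" by (rule bidual_coords_mem)
  obtain C where C: "0 \<le> C" "\<And>g. g \<in> dual_space LF NF \<Longrightarrow> \<bar>\<Phi> g\<bar> \<le> C * dual_norm LF NF g"
    by (rule bidual_bound) blast
  obtain Cf where Cf: "0 \<le> Cf" "\<And>x. x \<in> LF \<Longrightarrow> \<bar>f x\<bar> \<le> Cf * NF x"
    by (rule LF.dual_bounded[OF f]) blast
  have close: "\<bar>\<Phi> f - f ?z\<bar> \<le> (C + 1) * \<epsilon>" if "\<epsilon> > 0" for \<epsilon>
  proof -
    obtain N1 where N1: "\<And>n. N1 \<le> n \<Longrightarrow> dual_norm LF NF (\<lambda>x. f x - trunc_functional LF f n x) \<le> \<epsilon>"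
      using dual_minus_trunc_functional_small[OF f \<open>\<epsilon> > 0\<close>] by blast
    have "(\<lambda>n. Cf * NF (tail n ?z)) \<longlonglongrightarrow> Cf * 0"
      by (intro tendsto_mult_left F_norm_tail_tendsto_0 zL)
    then have "\<forall>\<^sub>F n in sequentially. Cf * NF (tail n ?z) < \<epsilon>"
      using order_tendstoD(2)[of _ "Cf * 0" _ \<epsilon>] \<open>\<epsilon> > 0\<close> by simp
    then obtain N2 where N2: "\<And>n. N2 \<le> n \<Longrightarrow> Cf * NF (tail n ?z) < \<epsilon>"
      unfolding eventually_sequentially by blast
    define n where "n = max N1 N2"
    have fnD: "trunc_functional LF f n \<in> dual_space LF NF" by (rule trunc_functional_mem_dual)
    have "\<Phi> f - f ?z = \<Phi> (\<lambda>x. f x - trunc_functional LF f n x) - f (tail n ?z)"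
      using bidual_diff[OF f fnD] bidual_trunc_functional[OF f, of n] dual_trunc_plus_tail[OF f zL, of n]
      by simp
    moreover have "\<bar>\<Phi> (\<lambda>x. f x - trunc_functional LF f n x)\<bar> \<le> C * \<epsilon>"
      using C(2)[OF LF.dual_space_diff[OF f fnD]] mult_left_mono[OF N1 C(1), of n]
      by (simp add: n_def)
    moreover have "\<bar>f (tail n ?z)\<bar> \<le> \<epsilon>"
      using Cf(2)[of "tail n ?z"] F_tail[OF zL, of n] N2[of n] by (simp add: n_def)
    ultimately show ?thesis by (simp add: distrib_right)
  qed
  then have "\<bar>\<Phi> f - f ?z\<bar> \<le> 0 + e" if "e > 0" for e
    using close[of "e / (C + 1)"] that C(1) by simp
  then show ?thesis using field_le_epsilon[of "\<bar>\<Phi> f - f ?z\<bar>" 0] by simp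
qed

end

context summable_block_weights
begin

theorem F_reflexive: "reflexive_space LF NF"
  unfolding reflexive_space_def
proof (intro allI impI)
  fix \<Phi> :: "(seq \<Rightarrow> real) \<Rightarrow> real"
  assume "(\<forall>f\<in>dual_space LF NF. \<forall>g\<in>dual_space LF NF. \<Phi> (\<lambda>x. f x + g x) = \<Phi> f + \<Phi> g)
    \<and> (\<forall>c. \<forall>f\<in>dual_space LF NF. \<Phi> (\<lambda>x. c * f x) = c * \<Phi> f)
    \<and> (\<exists>C. \<forall>f\<in>dual_space LF NF. \<bar>\<Phi> f\<bar> \<le> C * dual_norm LF NF f)"
  then interpret F_bidual m \<Phi>
    by unfold_locales (auto simp: block_pos summable_inverse LF.lin_subspace LF.norm)
  show "\<exists>x\<in>LF. \<forall>f\<in>dual_space LF NF. \<Phi> f = f x"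
    using bidual_coords_mem bidual_eq_eval by blast
qed

end

section \<open>Symmetric sequence spaces and their fundamental function\<close>

locale symmetric_space =
  fixes L :: "seq set" and N :: "seq \<Rightarrow> real"
  assumes symmetric: "symmetric_seq_space L N"
begin

sublocale normed_seq_space L N
  using symmetric unfolding symmetric_seq_space_def by unfold_locales blast+

lemma mem_linf: "x \<in> L \<Longrightarrow> x \<in> linf"
  and complete: "complete_wrt L N"
  and mem_if_decr_rearr_le: "x \<in> linf \<Longrightarrow> y \<in> L \<Longrightarrow> (\<And>n. mu x n \<le> mu y n) \<Longrightarrow> x \<in> L \<and> N x \<le> N y"
  using symmetric unfolding symmetric_seq_space_def by blast+

lemma linf_subset_if_decr_rearr_ge:
  assumes "y \<in> L" "r > 0" "\<And>n. r \<le> mu y n"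
  shows "linf \<subseteq> L"
proof
  fix x assume x: "x \<in> linf"
  obtain B where B: "0 \<le> B" "\<And>k. \<bar>x k\<bar> \<le> B" by (rule linf_bound[OF x]) blast
  define c where "c = r / (B + 1)"
  have c: "c > 0" unfolding c_def using assms(2) B(1) by simp
  have cx: "\<bar>c * x k\<bar> \<le> r" for k
  proof -
    have "\<bar>c * x k\<bar> \<le> c * (B + 1)" using B(2)[of k] c by (simp add: abs_mult mult_left_mono)
    also have "\<dots> = r" unfolding c_def using B(1) by simp
    finally show ?thesis .
  qed
  have "mu (\<lambda>k. c * x k) n \<le> mu y n" for n
    using decr_rearr_le_bound[OF cx] assms(2) assms(3)[of n] by (meson less_imp_le order_trans)
  then have "(\<lambda>k. c * x k) \<in> L" using mem_if_decr_rearr_le[OF linf_scale[OF x] assms(1)] by blast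
  then have "(\<lambda>k. (1 / c) * (c * x k)) \<in> L" by (rule scale_mem)
  then show "x \<in> L" using c by simp
qed

lemma subset_c0_if_ne_linf:
  assumes "L \<noteq> linf"
  shows "L \<subseteq> c0"
proof
  fix y assume y: "y \<in> L"
  have "y \<longlonglongrightarrow> 0"
  proof (rule ccontr)
    assume "\<not> y \<longlonglongrightarrow> 0"
    then obtain r where r: "r > 0" "infinite {k. r \<le> \<bar>y k\<bar>}" by (rule infinite_level_set_if_not_null)
    have "r \<le> mu y n" for n
    proof -
      obtain S where "finite S" "card S = Suc n" "S \<subseteq> {k. r \<le> \<bar>y k\<bar>}"
        using infinite_arbitrarily_large[OF r(2)] by blast
      then show ?thesis by (intro decr_rearr_ge[OF mem_linf[OF y]]) auto
    qed
    then have "linf \<subseteq> L" by (rule linf_subset_if_decr_rearr_ge[OF y r(1)])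
    with assms mem_linf show False by blast
  qed
  then show "y \<in> c0" unfolding c0_def by simp
qed

definition fundamental :: "nat \<Rightarrow> real" where
  "fundamental n = N (indicator {..<n})"

end

locale nontrivial_symmetric_space = symmetric_space +
  assumes nontrivial: "L \<noteq> {\<lambda>k. 0}"
begin

lemma indicator_singleton_mem: "indicator {k} \<in> L"
proof -
  obtain y where y: "y \<in> L" "y \<noteq> (\<lambda>k. 0)" using nontrivial zero_mem by blast
  then obtain j where "y j \<noteq> 0" by auto
  define c where "c = \<bar>y j\<bar>"
  have c: "c > 0" unfolding c_def using \<open>y j \<noteq> 0\<close> by simp
  have "mu (\<lambda>i. c * indicator {k} i) n \<le> mu y n" for n
    by (rule scaled_indicator_le_decr_rearr[OF mem_linf[OF y(1)], of _ "{j}"]) (auto simp: c_def)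
  then have "(\<lambda>i. c * indicator {k} i) \<in> L"
    using mem_if_decr_rearr_le[OF scaled_indicator_linf y(1)] by blast
  then have "(\<lambda>i. (1 / c) * (c * indicator {k} i)) \<in> L" by (rule scale_mem)
  then show ?thesis using c by simp
qed

lemma indicator_mem: "finite A \<Longrightarrow> indicator A \<in> L"
proof (induction A rule: finite_induct)
  case empty
  then show ?case using zero_mem by simp
next
  case (insert a A)
  have "(indicator (insert a A) :: seq) = (\<lambda>k. indicator {a} k + indicator A k)"
    unfolding indicator_def using insert.hyps(2) by (auto simp: fun_eq_iff)
  then show ?case using add_mem[OF indicator_singleton_mem insert.IH] by simp
qed

lemma norm_le_fundamental:
  assumes "finite S" "card S \<le> n" "\<And>k. k \<notin> S \<Longrightarrow> x k = 0" "\<And>k. \<bar>x k\<bar> \<le> c" "0 \<le> c"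
  shows "x \<in> L \<and> N x \<le> c * fundamental n"
proof -
  have lx: "x \<in> linf" using assms(4) by (rule linfI)
  have "(\<lambda>j. c * indicator {..<n} j) \<in> L" by (intro scale_mem indicator_mem) simp
  moreover have "mu x i \<le> mu (\<lambda>j. c * indicator {..<n} j) i" for i
    by (rule decr_rearr_le_scaled_indicator[OF _ assms(1) _ assms(3-5)]) (use assms(2) in simp_all)
  ultimately have "x \<in> L \<and> N x \<le> N (\<lambda>j. c * indicator {..<n} j)"
    using mem_if_decr_rearr_le[OF lx] by blast
  then show ?thesis
    using norm_scale[OF indicator_mem, of "{..<n}" c] assms(5) by (simp add: fundamental_def)
qed

lemma fundamental_le_norm:
  assumes "y \<in> L" "finite S" "n \<le> card S" "\<And>k. k \<in> S \<Longrightarrow> c \<le> \<bar>y k\<bar>" "0 \<le> c"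
  shows "c * fundamental n \<le> N y"
proof -
  have "mu (\<lambda>j. c * indicator {..<n} j) i \<le> mu y i" for i
    by (rule scaled_indicator_le_decr_rearr[OF mem_linf[OF assms(1)] _ assms(2) _ assms(4,5)])
      (use assms(3) in simp_all)
  then have "N (\<lambda>j. c * indicator {..<n} j) \<le> N y"
    using mem_if_decr_rearr_le[OF scaled_indicator_linf assms(1)] by blast
  then show ?thesis
    using norm_scale[OF indicator_mem, of "{..<n}" c] assms(5) by (simp add: fundamental_def)
qed

lemma fundamental_pos:
  assumes "0 < n"
  shows "0 < fundamental n"
proof -
  have "(indicator {..<n} :: seq) 0 \<noteq> 0" using assms by simp
  then have "(indicator {..<n} :: seq) \<noteq> (\<lambda>k. 0)" by auto
  then have "N (indicator {..<n}) \<noteq> 0" using norm_eq_0_iff[OF indicator_mem, of "{..<n}"] by simp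
  moreover have "0 \<le> N (indicator {..<n})" by (rule norm_nonneg[OF indicator_mem]) simp
  ultimately show ?thesis unfolding fundamental_def by (simp add: less_le)
qed

lemma fundamental_mono: "mono fundamental"
proof (rule monoI)
  fix i j :: nat assume "i \<le> j"
  then show "fundamental i \<le> fundamental j"
    using norm_le_fundamental[of "{..<i}" j "indicator {..<i}" 1] by (simp add: fundamental_def)
qed

lemma abs_coord_le_norm: "v \<in> L \<Longrightarrow> \<bar>v k\<bar> * fundamental 1 \<le> N v"
  using fundamental_le_norm[of v "{k}" 1 "\<bar>v k\<bar>"] by (simp add: mult.commute)

lemma coord_tendsto_if_norm_tendsto:
  assumes "\<And>n. X n \<in> L" "u \<in> L" "(\<lambda>n. N (\<lambda>k. X n k - u k)) \<longlonglongrightarrow> 0"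
  shows "(\<lambda>n. X n k) \<longlonglongrightarrow> u k"
proof -
  have \<phi>1: "0 < fundamental 1" by (rule fundamental_pos) simp
  have "\<bar>X n k - u k\<bar> * fundamental 1 \<le> \<bar>N (\<lambda>k. X n k - u k)\<bar>" for n
    using abs_coord_le_norm[OF diff_mem[OF assms(1,2)], of n k] by linarith
  then have "norm (X n k - u k) \<le> norm (N (\<lambda>k. X n k - u k)) * (1 / fundamental 1)" for n
    using \<phi>1 by (simp add: le_divide_eq)
  then have "(\<lambda>n. X n k - u k) \<longlonglongrightarrow> 0" by (intro tendsto_0_le[OF assms(3)] always_eventually) blast
  then show ?thesis by (simp add: LIM_zero_iff)
qed

lemma trunc_Cauchy_if_fundamental_bounded:
  assumes B: "\<And>n. fundamental n \<le> B" and zc: "z \<longlonglongrightarrow> 0" and "e > 0"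
  shows "\<exists>M. \<forall>i\<ge>M. \<forall>j\<ge>M. N (\<lambda>k. trunc i z k - trunc j z k) < e"
proof -
  define D where "D = B + 1"
  have D: "D > 0" unfolding D_def using B[of 1] fundamental_pos[of 1] by simp
  define \<beta> where "\<beta> = e / 2 / D"
  have \<beta>: "\<beta> > 0" unfolding \<beta>_def using \<open>e > 0\<close> D by simp
  obtain M where M: "\<And>k. M \<le> k \<Longrightarrow> \<bar>z k\<bar> < \<beta>" using LIMSEQ_D[OF zc \<beta>] by auto
  have "N (\<lambda>k. trunc i z k - trunc j z k) < e" if "M \<le> i" "M \<le> j" for i j
  proof -
    have "\<bar>trunc i z k - trunc j z k\<bar> \<le> \<beta>" for k
      using M[of k] that \<beta> by (auto simp: trunc_def)
    moreover have "trunc i z k - trunc j z k = 0" if "k \<notin> {..<max i j}" for k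
      using that by (simp add: trunc_def not_less)
    ultimately have "N (\<lambda>k. trunc i z k - trunc j z k) \<le> \<beta> * fundamental (max i j)"
      using norm_le_fundamental[of "{..<max i j}" "max i j" "\<lambda>k. trunc i z k - trunc j z k" \<beta>] \<beta>
      by simp
    also have "\<dots> \<le> \<beta> * D" using B[of "max i j"] \<beta> by (intro mult_left_mono) (simp_all add: D_def)
    also have "\<dots> = e / 2" unfolding \<beta>_def using D by simp
    also have "\<dots> < e" using \<open>e > 0\<close> by simp
    finally show ?thesis .
  qed
  then show ?thesis by blast
qed

lemma c0_subset_if_fundamental_bounded:
  assumes B: "\<And>n. fundamental n \<le> B"
  shows "c0 \<subseteq> L"
proof
  fix z assume "z \<in> c0"
  then have zc: "z \<longlonglongrightarrow> 0" by (simp add: c0_def)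
  obtain K where K: "\<And>n. \<bar>z n\<bar> \<le> K"
    using convergent_imp_Bseq[OF convergentI[OF zc]] unfolding Bseq_def by auto
  have XL: "trunc n z \<in> L" for n
  proof -
    have "\<bar>trunc n z k\<bar> \<le> \<bar>K\<bar>" for k using K[of k] by (auto simp: trunc_def)
    moreover have "trunc n z k = 0" if "k \<notin> {..<n}" for k using that by (simp add: trunc_def)
    ultimately show ?thesis using norm_le_fundamental[of "{..<n}" n "trunc n z" "\<bar>K\<bar>"] by simp
  qed
  obtain u where u: "u \<in> L" "(\<lambda>n. N (\<lambda>k. trunc n z k - u k)) \<longlonglongrightarrow> 0"
    using complete[unfolded complete_wrt_def, rule_format, of "\<lambda>n. trunc n z"] XL
      trunc_Cauchy_if_fundamental_bounded[OF B zc] by blast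
  have "u k = z k" for k
  proof (rule LIMSEQ_unique)
    show "(\<lambda>n. trunc n z k) \<longlonglongrightarrow> u k" by (rule coord_tendsto_if_norm_tendsto[OF XL u])
    have "\<forall>\<^sub>F n in sequentially. z k = trunc n z k"
      unfolding eventually_sequentially by (auto simp: trunc_def intro!: exI[of _ "Suc k"])
    then show "(\<lambda>n. trunc n z k) \<longlonglongrightarrow> z k" by (rule Lim_transform_eventually[OF tendsto_const])
  qed
  then have "u = z" by (simp add: fun_eq_iff)
  with u(1) show "z \<in> L" by simp
qed

lemma fundamental_tendsto_infinity:
  assumes "L \<noteq> c0" "L \<noteq> linf"
  shows "filterlim fundamental at_top sequentially"
  unfolding filterlim_at_top eventually_sequentially
proof
  fix B
  have "\<not> (\<forall>n. fundamental n \<le> B)"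
    using c0_subset_if_fundamental_bounded[of B] subset_c0_if_ne_linf assms by blast
  then obtain n where "B < fundamental n" by (auto simp: not_le)
  then show "\<exists>n0. \<forall>n\<ge>n0. B \<le> fundamental n"
    using fundamental_mono by (auto intro: order_trans[OF less_imp_le] dest: monoD)
qed

definition sum_inv_sq_fundamental :: "nat \<Rightarrow> real" where
  "sum_inv_sq_fundamental n = (\<Sum>i<n. 1 / (fundamental (Suc i))\<^sup>2)"

lemma sum_inv_sq_fundamental_mono: "mono sum_inv_sq_fundamental"
  unfolding sum_inv_sq_fundamental_def by (intro monoI sum_mono2) auto

lemma sum_squares_le_norm_sq:
  assumes "y \<in> L" "finite S"
  shows "(\<Sum>k\<in>S. (y k)\<^sup>2) \<le> (N y)\<^sup>2 * sum_inv_sq_fundamental (card S)"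
  using assms(2)
proof (induction "card S" arbitrary: S)
  case 0
  then show ?case by (simp add: sum_inv_sq_fundamental_def)
next
  case (Suc j)
  define c where "c = Min ((\<lambda>k. \<bar>y k\<bar>) ` S)"
  have "c \<in> (\<lambda>k. \<bar>y k\<bar>) ` S" unfolding c_def using Suc by (intro Min_in) auto
  then obtain k where k: "k \<in> S" "\<bar>y k\<bar> = c" by auto
  have cmin: "c \<le> \<bar>y k'\<bar>" if "k' \<in> S" for k' unfolding c_def using Suc that by simp
  have "card (S - {k}) = j" using Suc k by simp
  then have IH: "(\<Sum>k\<in>S-{k}. (y k)\<^sup>2) \<le> (N y)\<^sup>2 * sum_inv_sq_fundamental j"
    using Suc.hyps(1)[of "S - {k}"] Suc.prems by simp
  have pos: "0 < fundamental (Suc j)" by (rule fundamental_pos) simp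
  have "c * fundamental (Suc j) \<le> N y"
    by (rule fundamental_le_norm[OF assms(1) Suc.prems _ cmin]) (use Suc.hyps(2) k in auto)
  then have "c \<le> N y / fundamental (Suc j)" using pos by (simp add: le_divide_eq)
  then have "c\<^sup>2 \<le> (N y / fundamental (Suc j))\<^sup>2" using k by (intro power_mono) auto
  then have "\<bar>y k\<bar>\<^sup>2 \<le> (N y)\<^sup>2 * (1 / (fundamental (Suc j))\<^sup>2)" using k by (simp add: power_divide)
  then have yk: "(y k)\<^sup>2 \<le> (N y)\<^sup>2 * (1 / (fundamental (Suc j))\<^sup>2)" by simp
  have "(\<Sum>k\<in>S. (y k)\<^sup>2) = (y k)\<^sup>2 + (\<Sum>k\<in>S-{k}. (y k)\<^sup>2)" using Suc k by (simp add: sum.remove)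
  also have "\<dots> \<le> (N y)\<^sup>2 * (1 / (fundamental (Suc j))\<^sup>2) + (N y)\<^sup>2 * sum_inv_sq_fundamental j"
    using yk IH by simp
  also have "\<dots> = (N y)\<^sup>2 * sum_inv_sq_fundamental (Suc j)"
    unfolding sum_inv_sq_fundamental_def by (simp add: distrib_left)
  finally show ?case using Suc.hyps(2) by simp
qed

lemma sum_inv_sq_fundamental_sublinear:
  assumes "L \<noteq> c0" "L \<noteq> linf" "\<epsilon> > 0"
  shows "\<exists>M. \<forall>n\<ge>M. sum_inv_sq_fundamental n \<le> \<epsilon> * real n"
proof -
  have "filterlim (\<lambda>i. (fundamental (Suc i))\<^sup>2) at_top sequentially"
    using fundamental_tendsto_infinity[OF assms(1,2)]
    by (intro filterlim_pow_at_top) (simp_all add: filterlim_sequentially_Suc)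
  then have "(\<lambda>i. 1 / (fundamental (Suc i))\<^sup>2) \<longlonglongrightarrow> 0"
    using tendsto_inverse_0_at_top by (simp add: inverse_eq_divide)
  then show ?thesis unfolding sum_inv_sq_fundamental_def by (rule partial_sums_sublinear_if_null[OF _ assms(3)])
qed

lemma top_mean_sq_le_norm_sq:
  assumes "block_weights m" "y \<in> L" "sum_inv_sq_fundamental (m t) \<le> c * real (m t)"
  shows "top_mean_sq m t y \<le> (N y)\<^sup>2 * c"
proof -
  interpret block_weights m by (rule assms(1))
  show ?thesis
  proof (rule top_mean_sq_le)
    fix S :: "nat set" assume S: "finite S" "card S \<le> m t"
    have "(\<Sum>k\<in>S. (y k)\<^sup>2) \<le> (N y)\<^sup>2 * sum_inv_sq_fundamental (card S)"
      by (rule sum_squares_le_norm_sq[OF assms(2) S(1)])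
    also have "\<dots> \<le> (N y)\<^sup>2 * sum_inv_sq_fundamental (m t)"
      using monoD[OF sum_inv_sq_fundamental_mono S(2)] by (intro mult_left_mono) simp_all
    also have "\<dots> \<le> (N y)\<^sup>2 * (c * real (m t))" using assms(3) by (intro mult_left_mono) simp_all
    finally show "(\<Sum>k\<in>S. (y k)\<^sup>2) / real (m t) \<le> (N y)\<^sup>2 * c"
      using block_pos[of t] by (simp add: divide_le_eq mult.assoc)
  qed
qed

text \<open>Choose \<open>m t \<ge> 2\<^sup>t\<close> so large that \<open>sum_inv_sq_fundamental (m t) \<le> 2\<^sup>-\<^sup>t m t\<close>; then
  \<open>\<tau> t y \<le> 2\<^sup>-\<^sup>t (N y)\<^sup>2\<close> for every \<open>y \<in> L\<close>.\<close>

lemma exists_block_weights_superspace_nontrivial: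
  assumes "L \<noteq> c0" "L \<noteq> linf"
  shows "\<exists>m. summable_block_weights m \<and> L \<subseteq> F_space m"
proof -
  have "\<exists>M. \<forall>n\<ge>M. sum_inv_sq_fundamental n \<le> (1/2)^t * real n" for t
    by (rule sum_inv_sq_fundamental_sublinear[OF assms]) simp
  then obtain M where M: "\<And>t n. M t \<le> n \<Longrightarrow> sum_inv_sq_fundamental n \<le> (1/2)^t * real n" by metis
  define m where "m t = max (M t) (2^t)" for t
  have m1: "1 \<le> m t" for t unfolding m_def by (simp add: le_max_iff_disj)
  have inv: "1 / real (m t) \<le> (1/2)^t" for t
  proof -
    have "(2::real)^t \<le> real (m t)" unfolding m_def by (metis of_nat_le_iff of_nat_numeral of_nat_power max.cobounded2)
    then have "1 / real (m t) \<le> 1 / (2::real)^t" using m1[of t] by (intro divide_left_mono) auto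
    then show ?thesis by (simp add: power_one_over)
  qed
  have geo: "summable (\<lambda>t. (1/2::real)^t)" by simp
  have sbw: "summable_block_weights m"
  proof
    show "1 \<le> m t" for t by (rule m1)
    show "summable (\<lambda>t. 1 / real (m t))"
      by (rule summable_comparison_test'[OF geo]) (simp add: inv)
  qed
  interpret summable_block_weights m by (rule sbw)
  have "y \<in> LF" if y: "y \<in> L" for y
  proof -
    have "\<tau> t y \<le> (N y)\<^sup>2 * (1/2)^t" for t
      using block_weights_axioms y M[of t "m t"] by (intro top_mean_sq_le_norm_sq) (simp_all add: m_def)
    then have "summable (\<lambda>t. \<tau> t y)"
      by (intro summable_comparison_test'[OF summable_mult[OF geo, of "(N y)\<^sup>2"]])
        (simp add: top_mean_sq_nonneg mem_linf[OF y])
    then show ?thesis using mem_linf[OF y] by (rule F_memI[rotated])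
  qed
  with sbw show ?thesis by blast
qed

end

lemma (in symmetric_space) exists_block_weights_superspace:
  assumes "L \<noteq> c0" "L \<noteq> linf"
  shows "\<exists>m. summable_block_weights m \<and> L \<subseteq> F_space m"
proof (cases "L = {\<lambda>k. 0}")
  case False
  then interpret nontrivial_symmetric_space L N by unfold_locales
  show ?thesis by (rule exists_block_weights_superspace_nontrivial[OF assms])
next
  case True
  define m :: "nat \<Rightarrow> nat" where "m t = 2 ^ t" for t
  have "summable_block_weights m"
    by unfold_locales (simp_all add: m_def power_one_over[symmetric])
  then have "L \<subseteq> F_space m"
    using True block_weights.F_zero[of m] summable_block_weights.axioms(1) by blast
  with \<open>summable_block_weights m\<close> show ?thesis by blast
qed

theorem corollary3p2:
  fixes LE :: "seq set" and NE :: "seq \<Rightarrow> real"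
  assumes "symmetric_seq_space LE NE"
    and "LE \<noteq> c0" and "LE \<noteq> linf"
  shows "\<exists>LF NF. symmetric_seq_space LF NF \<and> reflexive_space LF NF \<and> LE \<subseteq> LF"
proof -
  interpret symmetric_space LE NE by (rule symmetric_space.intro) (rule assms(1))
  obtain m where "summable_block_weights m" "LE \<subseteq> F_space m"
    using exists_block_weights_superspace assms(2,3) by blast
  then interpret summable_block_weights m by simp
  show ?thesis using F_symmetric F_reflexive \<open>LE \<subseteq> F_space m\<close> by blast
qed

end
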